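(* Assume $a>0$, $b>0$. Let $w,w'\in W_n$ be such that $w\smile_1 w'$. Then $w\sim_R w'$.
   Context: $W_n$ is the Weyl group of type $B_n$ with Coxeter generators $t,s_1,\dots,s_{n-1}$ ($(ts_1)^4=1$, $(s_is_{i+1})^3=1$, other distinct pairs commute), identified with the permutations $w$ of $\{\pm1,\dots,\pm n\}$ with $w(-i)=-w(i)$ via $t\mapsto(1,-1)$, $s_i\mapsto(i,i+1)(-i,-i-1)$. For $w,w'\in W_n$, $w\smile_1 w'$ means: there exists $i$ with $2\le i\le n-1$ and $w(i)<w(i-1)<w(i+1)$, or $1\le i\le n-2$ and $w(i)<w(i+2)<w(i+1)$, such that $w'=ws_i$. $\Gamma$ is a totally ordered abelian group, $a,b\in\Gamma$, $\varphi(t)=b$, $\varphi(s_i)=a$. $A=\mathbb{Z}[\Gamma]$, $Q=e^b$, $q=e^a$, $A_{<0}=\bigoplus_{\gamma<0}\mathbb{Z}e^\gamma$. $\mathcal{H}_n$ is the Hecke algebra over $A$ with basis $(T_w)$, $T_wT_{w'}=T_{ww'}$ when lengths add, $(T_t-Q)(T_t+Q^{-1})=0$, $(T_{s_i}-q)(T_{s_i}+q^{-1})=0$; bar involution $\overline{e^\gamma}=e^{-\gamma}$, $\overline{T_w}=T_{w^{-1}}^{-1}$; $C_w$ is the unique bar-invariant element with $C_w-T_w\in\bigoplus A_{<0}T_w$. Write $x\leftarrow_R y$ if for some $h\in\mathcal{H}_n$ the coefficient of $C_x$ in $C_yh$ is nonzero; $\le_R$ is its transitive closure and $x\sim_R y$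 means $x\le_R y$ and $y\le_R x$ (Kazhdan–Lusztig right cells). *)

theory Defs
  imports Main "HOL-Library.Poly_Mapping"
begin

type_synonym 'g grpring = "'g \<Rightarrow>\<^sub>0 int"

definition expo :: "'g::linordered_ab_group_add \<Rightarrow> 'g grpring" where
  "expo \<gamma> = Poly_Mapping.single \<gamma> 1"

definition barA :: "'g::linordered_ab_group_add grpring \<Rightarrow> 'g grpring" where
  "barA p = (\<Sum>\<gamma>\<in>Poly_Mapping.keys p. Poly_Mapping.single (- \<gamma>) (Poly_Mapping.lookup p \<gamma>))"

definition Aneg :: "'g::linordered_ab_group_add grpring set" where
  "Aneg = {p. \<forall>\<gamma>\<in>Poly_Mapping.keys p. \<gamma> < 0}"

section \<open>The Weyl group W_n of type B_n as signed permutations\<close>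

definition signed_dom :: "nat \<Rightarrow> int set" where
  "signed_dom n = {i. 1 \<le> \<bar>i\<bar> \<and> \<bar>i\<bar> \<le> int n}"

definition Wn :: "nat \<Rightarrow> (int \<Rightarrow> int) set" where
  "Wn n = {w. bij_betw w (signed_dom n) (signed_dom n) \<and> (\<forall>i. w (- i) = - w i)
              \<and> (\<forall>i. i \<notin> signed_dom n \<longrightarrow> w i = i)}"

definition tgen :: "int \<Rightarrow> int" where
  "tgen = (\<lambda>j. if j = 1 then -1 else if j = -1 then 1 else j)"

definition sgen :: "int \<Rightarrow> int \<Rightarrow> int" where
  "sgen i = (\<lambda>j. if j = i then i + 1 else if j = i + 1 then i
               else if j = - i then - i - 1 else if j = - i - 1 then - i else j)"

definition Sgens :: "nat \<Rightarrow> (int \<Rightarrow> int) set" where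
  "Sgens n = {tgen} \<union> {sgen i | i. 1 \<le> i \<and> i \<le> int n - 1}"

text \<open>Coxeter length with respect to the generators; a word [s1,...,sk] represents
  the product s1 s2 ... sk, i.e. the composition s1 o s2 o ... o sk.\<close>
definition word_prod :: "(int \<Rightarrow> int) list \<Rightarrow> (int \<Rightarrow> int)" where
  "word_prod ws = foldr (\<circ>) ws id"

definition clen :: "nat \<Rightarrow> (int \<Rightarrow> int) \<Rightarrow> nat" where
  "clen n w = (LEAST k. \<exists>ws. length ws = k \<and> set ws \<subseteq> Sgens n \<and> word_prod ws = w)"

definition red_word :: "nat \<Rightarrow> (int \<Rightarrow> int) \<Rightarrow> (int \<Rightarrow> int) list" where
  "red_word n w = (SOME ws. set ws \<subseteq> Sgens n \<and> word_prod ws = w \<and> length ws = clen n w)"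

section \<open>The Hecke algebra H_n (via its right regular representation)\<close>

text \<open>An element sum_w c_w T_w of H_n is represented by its coefficient function
  (int => int) => A (supported on W_n).\<close>
type_synonym 'g hmod = "(int \<Rightarrow> int) \<Rightarrow> 'g grpring"

definition vpar :: "'g::linordered_ab_group_add \<Rightarrow> 'g \<Rightarrow> (int \<Rightarrow> int) \<Rightarrow> 'g grpring" where
  "vpar a b s = (if s = tgen then expo b else expo a)"

definition vinv :: "'g::linordered_ab_group_add \<Rightarrow> 'g \<Rightarrow> (int \<Rightarrow> int) \<Rightarrow> 'g grpring" where
  "vinv a b s = (if s = tgen then expo (- b) else expo (- a))"

definition Tb :: "(int \<Rightarrow> int) \<Rightarrow> 'g::linordered_ab_group_add hmod" where
  "Tb w = (\<lambda>y. if y = w then 1 else 0)"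

text \<open>Right multiplication by T_s:
  T_w T_s = T_{ws} if l(ws) > l(w), and T_{ws} + (v_s - v_s^{-1}) T_w otherwise.\<close>
definition rmulT :: "nat \<Rightarrow> 'g::linordered_ab_group_add \<Rightarrow> 'g \<Rightarrow> (int \<Rightarrow> int)
                      \<Rightarrow> 'g hmod \<Rightarrow> 'g hmod" where
  "rmulT n a b s m = (\<lambda>y. m (y \<circ> s) +
      (if clen n (y \<circ> s) < clen n y then (vpar a b s - vinv a b s) * m y else 0))"

text \<open>Right multiplication by T_s^{-1} = T_s - (v_s - v_s^{-1}).\<close>
definition rmulTinv :: "nat \<Rightarrow> 'g::linordered_ab_group_add \<Rightarrow> 'g \<Rightarrow> (int \<Rightarrow> int)
                      \<Rightarrow> 'g hmod \<Rightarrow> 'g hmod" where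
  "rmulTinv n a b s m = (\<lambda>y. rmulT n a b s m y - (vpar a b s - vinv a b s) * m y)"

text \<open>The Hecke algebra, as the A-algebra of operators (right multiplications) on the
  free module with basis (T_w) generated by the right multiplications by the T_s.\<close>
inductive_set hecke :: "nat \<Rightarrow> 'g::linordered_ab_group_add \<Rightarrow> 'g
                        \<Rightarrow> ('g hmod \<Rightarrow> 'g hmod) set" for n a b where
  scal: "(\<lambda>m y. c * m y) \<in> hecke n a b"
| gen: "s \<in> Sgens n \<Longrightarrow> rmulT n a b s \<in> hecke n a b"
| add: "f \<in> hecke n a b \<Longrightarrow> g \<in> hecke n a b \<Longrightarrow> (\<lambda>m y. f m y + g m y) \<in> hecke n a b"
| comp: "f \<in> hecke n a b \<Longrightarrow> g \<in> hecke n a b \<Longrightarrow> f \<circ> g \<in> hecke n a b"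

text \<open>T_{w^{-1}}^{-1} = T_{s1}^{-1} ... T_{sk}^{-1} for a reduced expression w = s1...sk.\<close>
definition Tinvbar :: "nat \<Rightarrow> 'g::linordered_ab_group_add \<Rightarrow> 'g \<Rightarrow> (int \<Rightarrow> int) \<Rightarrow> 'g hmod" where
  "Tinvbar n a b w = fold (rmulTinv n a b) (red_word n w) (Tb id)"

text \<open>Bar involution: sum a_w T_w  |->  sum bar(a_w) T_{w^{-1}}^{-1}.\<close>
definition barH :: "nat \<Rightarrow> 'g::linordered_ab_group_add \<Rightarrow> 'g \<Rightarrow> 'g hmod \<Rightarrow> 'g hmod" where
  "barH n a b m = (\<lambda>y. \<Sum>w\<in>Wn n. barA (m w) * Tinvbar n a b w y)"

definition KLC :: "nat \<Rightarrow> 'g::linordered_ab_group_add \<Rightarrow> 'g \<Rightarrow> (int \<Rightarrow> int) \<Rightarrow> 'g hmod" where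
  "KLC n a b w = (THE C. (\<forall>y. y \<notin> Wn n \<longrightarrow> C y = 0) \<and> barH n a b C = C
                     \<and> C w - 1 \<in> Aneg \<and> (\<forall>y. y \<noteq> w \<longrightarrow> C y \<in> Aneg))"

definition coeffC :: "nat \<Rightarrow> 'g::linordered_ab_group_add \<Rightarrow> 'g \<Rightarrow> (int \<Rightarrow> int) \<Rightarrow> 'g hmod \<Rightarrow> 'g grpring" where
  "coeffC n a b x m = (THE c. (\<forall>w. w \<notin> Wn n \<longrightarrow> c w = 0)
                          \<and> m = (\<lambda>y. \<Sum>w\<in>Wn n. c w * KLC n a b w y)) x"

definition arrowR :: "nat \<Rightarrow> 'g::linordered_ab_group_add \<Rightarrow> 'g \<Rightarrow> (int \<Rightarrow> int) \<Rightarrow> (int \<Rightarrow> int) \<Rightarrow> bool" where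
  "arrowR n a b x y \<longleftrightarrow> x \<in> Wn n \<and> y \<in> Wn n \<and>
     (\<exists>h\<in>hecke n a b. coeffC n a b x (h (KLC n a b y)) \<noteq> 0)"

definition leR :: "nat \<Rightarrow> 'g::linordered_ab_group_add \<Rightarrow> 'g \<Rightarrow> (int \<Rightarrow> int) \<Rightarrow> (int \<Rightarrow> int) \<Rightarrow> bool" where
  "leR n a b = (arrowR n a b)\<^sup>+\<^sup>+"

definition simR :: "nat \<Rightarrow> 'g::linordered_ab_group_add \<Rightarrow> 'g \<Rightarrow> (int \<Rightarrow> int) \<Rightarrow> (int \<Rightarrow> int) \<Rightarrow> bool" where
  "simR n a b x y \<longleftrightarrow> leR n a b x y \<and> leR n a b y x"

definition smile1 :: "nat \<Rightarrow> (int \<Rightarrow> int) \<Rightarrow> (int \<Rightarrow> int) \<Rightarrow> bool" where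
  "smile1 n w w' \<longleftrightarrow> (\<exists>i::int.
     ((2 \<le> i \<and> i \<le> int n - 1 \<and> w i < w (i - 1) \<and> w (i - 1) < w (i + 1)) \<or>
      (1 \<le> i \<and> i \<le> int n - 2 \<and> w i < w (i + 2) \<and> w (i + 2) < w (i + 1)))
     \<and> w' = w \<circ> sgen i)"

end

theory Submission
  imports Defs "HOL-Library.FuncSet"
begin

text \<open>If \<open>w < w s\<close> for a simple reflection \<open>s\<close>, then \<open>C\<^sub>w C\<^sub>s = C\<^sub>w\<^sub>s + (shorter terms)\<close>, so \<open>w s \<le>\<^sub>R w\<close>.
  Conversely, \<open>w \<smile>\<^sub>1 w' = w s\<^sub>i\<close> provides an adjacent \<open>t = s\<^sub>j\<close> with \<open>w t < w < w' < w' t\<close>. The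
  coefficient of \<open>T\<^sub>w\<close> in \<open>C\<^sub>w\<^sub>'\<close> is \<open>e\<^sup>-\<^sup>a\<close>, hence the coefficient of \<open>T\<^sub>w\<close> in \<open>C\<^sub>w\<^sub>' C\<^sub>t\<close> is \<open>1\<close> modulo \<open>A\<^sub><\<^sub>0\<close>; as the coefficient
  of \<open>C\<^sub>w\<close> in \<open>C\<^sub>w\<^sub>' C\<^sub>t\<close> is bar-invariant, it equals \<open>1\<close>, and \<open>w \<le>\<^sub>R w'\<close>.

  The basis \<open>C\<^sub>w\<close> is only characterised implicitly; it exists by induction on the length: for
  \<open>w s < w\<close>, the product \<open>C\<^sub>w\<^sub>s C\<^sub>s\<close> corrected by bar-invariant multiples of shorter \<open>C\<^sub>z\<close> has the
  defining properties of \<open>C\<^sub>w\<close>. This needs the bar involution to be compatible with right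
  multiplication, i.e. the product of the \<open>T\<^sub>s\<^sup>-\<^sup>1\<close> along a reduced word of \<open>w\<close> not to depend on
  the word, which holds because right multiplications commute with left multiplications.\<close>

lemma finite_obtain_max:
  fixes f :: "'a \<Rightarrow> 'b::linorder"
  assumes "finite S" and "S \<noteq> {}"
  obtains z where "z \<in> S" and "\<And>u. u \<in> S \<Longrightarrow> f u \<le> f z"
proof -
  have "Max (f ` S) \<in> f ` S"
    using assms by (intro Max_in) auto
  then obtain z where "z \<in> S" "f z = Max (f ` S)"
    by (metis imageE)
  with assms show ?thesis
    by (intro that[of z]) auto
qed

lemma sum_unitriangular_eval:
  fixes f :: "'a \<Rightarrow> 'b::linorder" and K :: "'a \<Rightarrow> 'a \<Rightarrow> 'c::semiring_1"
  assumes "finite Z" and "\<And>z. z \<in> Z \<Longrightarrow> f z = L" and "\<And>z. z \<in> Z \<Longrightarrow> K z z = 1"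
    and "\<And>z u. z \<in> Z \<Longrightarrow> K z u \<noteq> 0 \<Longrightarrow> u = z \<or> f u < L" and "L \<le> f y"
  shows "(\<Sum>z\<in>Z. c z * K z y) = (if y \<in> Z then c y else 0)"
proof -
  have "c z * K z y = 0" if "z \<in> Z" "z \<noteq> y" for z
    using assms(4)[OF that(1), of y] that(2) assms(5) by fastforce
  then show ?thesis
    using assms(1,3) by (cases "y \<in> Z") (auto simp: sum.remove intro!: sum.neutral)
qed

section \<open>The group ring\<close>

lemma lookup_barA: "Poly_Mapping.lookup (barA p) g = Poly_Mapping.lookup p (- g)"
proof -
  have "Poly_Mapping.lookup (barA p) g
      = (\<Sum>d\<in>Poly_Mapping.keys p. if d = - g then Poly_Mapping.lookup p d else 0)"
    unfolding barA_def lookup_sum by (intro sum.cong) (auto simp: lookup_single when_def)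
  also have "\<dots> = Poly_Mapping.lookup p (- g)"
    by (simp add: sum.delta in_keys_iff)
  finally show ?thesis .
qed

lemma barA_diff: "barA (p - q) = barA p - barA q"
  by (rule poly_mapping_eqI) (simp add: lookup_barA lookup_minus)

lemma barA_add: "barA (p + q) = barA p + barA q"
  by (rule poly_mapping_eqI) (simp add: lookup_barA lookup_add)

lemma barA_zero [simp]: "barA 0 = 0"
  by (rule poly_mapping_eqI) (simp add: lookup_barA)

lemma barA_one [simp]: "barA 1 = 1"
  by (rule poly_mapping_eqI) (simp add: lookup_barA lookup_one when_def)

lemma barA_single: "barA (Poly_Mapping.single g c) = Poly_Mapping.single (- g) c"
  by (rule poly_mapping_eqI) (auto simp: lookup_barA lookup_single when_def)

lemma barA_expo: "barA (expo g) = expo (- g)"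
  by (simp add: expo_def barA_single)

lemma barA_sum: "barA (sum f S) = (\<Sum>x\<in>S. barA (f x))"
  by (induction S rule: infinite_finite_induct) (auto simp: barA_add)

lemma barA_mult: "barA (p * q) = barA p * barA (q :: 'g::linordered_ab_group_add grpring)"
proof (rule frag_induction[of p UNIV])
  fix x
  show "barA (frag_of x * q) = barA (frag_of x) * barA q"
    by (rule frag_induction[of q UNIV])
       (simp_all add: mult_single barA_single add.commute algebra_simps barA_diff)
qed (simp_all add: algebra_simps barA_diff)

lemma expo_0 [simp]: "expo 0 = 1"
  by (simp add: expo_def)

lemma expo_mult: "expo g * expo h = expo (g + h)"
  by (simp add: expo_def mult_single)

lemma Aneg_iff: "p \<in> Aneg \<longleftrightarrow> (\<forall>g. Poly_Mapping.lookup p g \<noteq> 0 \<longrightarrow> g < 0)"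
  by (auto simp: Aneg_def in_keys_iff)

lemma Aneg_zero [simp]: "0 \<in> Aneg"
  by (simp add: Aneg_def)

lemma Aneg_diff: "p \<in> Aneg \<Longrightarrow> q \<in> Aneg \<Longrightarrow> p - q \<in> Aneg"
  by (auto simp: Aneg_iff lookup_minus) (metis diff_zero diff_0 minus_equation_iff)

lemma Aneg_expo: "g < 0 \<Longrightarrow> expo g \<in> Aneg"
  by (auto simp: Aneg_iff expo_def lookup_single when_def)

lemma bar_invariant_Aneg_eq_0:
  assumes "p \<in> Aneg" and "barA p = p"
  shows "p = 0"
proof (rule poly_mapping_eqI)
  fix g
  have "Poly_Mapping.lookup p g = Poly_Mapping.lookup p (- g)"
    using assms(2) by (metis lookup_barA)
  then show "Poly_Mapping.lookup p g = Poly_Mapping.lookup 0 g"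
    using assms(1) by (auto simp: Aneg_iff) (metis neg_less_0_iff_less not_less_iff_gr_or_eq)
qed

text \<open>Reflect the coefficients of \<open>p\<close> at non-negative exponents to the negative ones.\<close>
lemma exists_bar_invariant_approx:
  "\<exists>c. barA c = c \<and> p - c \<in> (Aneg :: 'g::linordered_ab_group_add grpring set)"
proof -
  define f where "f g = (if g < 0 then Poly_Mapping.lookup p (- g) else Poly_Mapping.lookup p g)" for g
  have "{g. f g \<noteq> 0} \<subseteq> Poly_Mapping.keys p \<union> uminus ` Poly_Mapping.keys p"
    by (auto simp: f_def in_keys_iff split: if_splits intro!: image_eqI[where x = "- _"])
  then have "finite {g. f g \<noteq> 0}"
    by (rule finite_subset) simp
  then have lookup_c: "Poly_Mapping.lookup (Abs_poly_mapping f) = f"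
    by simp
  have "barA (Abs_poly_mapping f) = Abs_poly_mapping f"
    by (rule poly_mapping_eqI) (auto simp: lookup_barA lookup_c f_def)
  moreover have "p - Abs_poly_mapping f \<in> Aneg"
    by (auto simp: Aneg_iff lookup_minus lookup_c f_def)
  ultimately show ?thesis by blast
qed

section \<open>Signed permutations and the Coxeter generators\<close>

lemma finite_signed_dom [simp]: "finite (signed_dom n)"
  by (rule finite_subset[of _ "{- int n..int n}"]) (auto simp: signed_dom_def)

lemma in_signed_dom: "x \<in> signed_dom n \<longleftrightarrow> 1 \<le> \<bar>x\<bar> \<and> \<bar>x\<bar> \<le> int n"
  by (simp add: signed_dom_def)

lemma Wn_signed_dom: "y \<in> Wn n \<Longrightarrow> x \<in> signed_dom n \<Longrightarrow> y x \<in> signed_dom n"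
  by (auto simp: Wn_def bij_betw_def)

lemma Wn_odd: "y \<in> Wn n \<Longrightarrow> y (- x) = - y x"
  by (auto simp: Wn_def)

lemma Wn_fixes_outside: "y \<in> Wn n \<Longrightarrow> x \<notin> signed_dom n \<Longrightarrow> y x = x"
  by (auto simp: Wn_def)

lemma Wn_nonzero: "y \<in> Wn n \<Longrightarrow> 1 \<le> x \<Longrightarrow> x \<le> int n \<Longrightarrow> y x \<noteq> 0"
  using Wn_signed_dom[of y n x] by (auto simp: in_signed_dom)

lemma Wn_bij:
  assumes "y \<in> Wn n"
  shows "bij y"
proof -
  have "bij_betw y (signed_dom n) (signed_dom n)"
    using assms by (simp add: Wn_def)
  moreover have "bij_betw y (- signed_dom n) (- signed_dom n)"
    using Wn_fixes_outside[OF assms] by (intro bij_betw_imageI) (auto simp: inj_on_def image_iff)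
  ultimately have "bij_betw y (signed_dom n \<union> - signed_dom n) (signed_dom n \<union> - signed_dom n)"
    by (rule bij_betw_combine) auto
  then show ?thesis by simp
qed

lemma Wn_inj_eq: "y \<in> Wn n \<Longrightarrow> y u = y v \<longleftrightarrow> u = v"
  using Wn_bij by (metis bij_def injD)

lemma Wn_intro:
  assumes "bij y" and "\<And>x. y (- x) = - y x" and "\<And>x. x \<notin> signed_dom n \<Longrightarrow> y x = x"
  shows "y \<in> Wn n"
proof -
  have "y ` (- signed_dom n) = - signed_dom n"
    using assms(3) by (auto simp: image_iff)
  then have "y ` signed_dom n = signed_dom n"
    using assms(1) by (metis bij_image_Compl_eq double_compl)
  then have "bij_betw y (signed_dom n) (signed_dom n)"
    using assms(1) by (metis bij_betw_def bij_betw_subset subset_UNIV)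
  then show ?thesis
    using assms by (simp add: Wn_def)
qed

lemma Wn_comp: "y \<in> Wn n \<Longrightarrow> z \<in> Wn n \<Longrightarrow> y \<circ> z \<in> Wn n"
  by (rule Wn_intro) (auto simp: Wn_bij bij_comp Wn_odd Wn_fixes_outside)

lemma id_Wn [simp]: "id \<in> Wn n"
  by (rule Wn_intro) auto

lemma Wn_inv:
  assumes "y \<in> Wn n"
  shows "inv y \<in> Wn n"
proof (rule Wn_intro)
  show "bij (inv y)"
    using Wn_bij[OF assms] by (simp add: bij_imp_bij_inv)
  show "inv y (- x) = - inv y x" for x
    using Wn_bij[OF assms] by (metis Wn_odd[OF assms] bij_inv_eq_iff)
  show "inv y x = x" if "x \<notin> signed_dom n" for x
    using Wn_bij[OF assms] that by (metis Wn_fixes_outside[OF assms] bij_inv_eq_iff)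
qed

lemma finite_Wn: "finite (Wn n)"
proof -
  let ?S = "signed_dom n"
  let ?ext = "\<lambda>f x. if x \<in> ?S then f x else x"
  have "Wn n \<subseteq> ?ext ` (?S \<rightarrow>\<^sub>E ?S)"
  proof
    fix y
    assume y: "y \<in> Wn n"
    then have "y = ?ext (restrict y ?S)"
      using Wn_fixes_outside[OF y] by (auto simp: fun_eq_iff)
    moreover have "restrict y ?S \<in> ?S \<rightarrow>\<^sub>E ?S"
      using Wn_signed_dom[OF y] by auto
    ultimately show "y \<in> ?ext ` (?S \<rightarrow>\<^sub>E ?S)" by blast
  qed
  then show ?thesis
    by (rule finite_subset) (simp add: finite_PiE)
qed

lemma tgen_tgen [simp]: "tgen (tgen x) = x"
  by (auto simp: tgen_def)

lemma sgen_sgen [simp]: "0 < i \<Longrightarrow> sgen i (sgen i x) = x"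
  by (auto simp: sgen_def)

lemma tgen_Wn: "1 \<le> n \<Longrightarrow> tgen \<in> Wn n"
proof (rule Wn_intro)
  show "bij tgen"
    by (rule o_bij[of tgen]) (auto simp: fun_eq_iff)
qed (auto simp: tgen_def in_signed_dom)

lemma sgen_Wn: "1 \<le> i \<Longrightarrow> i \<le> int n - 1 \<Longrightarrow> sgen i \<in> Wn n"
proof (rule Wn_intro)
  assume "1 \<le> i"
  then show "bij (sgen i)"
    by (intro o_bij[of "sgen i"]) (auto simp: fun_eq_iff)
qed (auto simp: sgen_def in_signed_dom)

lemma Sgens_cases:
  assumes "s \<in> Sgens n"
  obtains "s = tgen" | i where "1 \<le> i" "i \<le> int n - 1" "s = sgen i"
  using assms by (auto simp: Sgens_def)

lemma Sgens_Wn: "1 \<le> n \<Longrightarrow> s \<in> Sgens n \<Longrightarrow> s \<in> Wn n"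
  by (auto elim!: Sgens_cases simp: tgen_Wn sgen_Wn)

lemma Sgens_involutive: "s \<in> Sgens n \<Longrightarrow> s (s x) = x"
  by (auto elim!: Sgens_cases)

lemma Sgens_comp_self: "s \<in> Sgens n \<Longrightarrow> y \<circ> s \<circ> s = y"
  by (auto simp: fun_eq_iff Sgens_involutive)

lemma Sgens_comp_eq_iff: "s \<in> Sgens n \<Longrightarrow> y \<circ> s = x \<longleftrightarrow> y = x \<circ> s"
  using Sgens_comp_self by metis

lemma Sgens_comp_comp_self: "s \<in> Sgens n \<Longrightarrow> s \<circ> (s \<circ> y) = y"
  by (auto simp: fun_eq_iff Sgens_involutive)

lemma Sgens_comp_left_eq_iff: "s \<in> Sgens n \<Longrightarrow> s \<circ> y = x \<longleftrightarrow> y = s \<circ> x"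
  using Sgens_comp_comp_self by metis

lemma inv_Sgens: "s \<in> Sgens n \<Longrightarrow> inv s = s"
  by (rule inv_unique_comp) (auto simp: fun_eq_iff Sgens_involutive)

lemma tgen_neq_sgen: "1 \<le> i \<Longrightarrow> tgen \<noteq> sgen i"
  by (auto simp: fun_eq_iff tgen_def sgen_def intro!: exI[of _ 1])

lemma Wn_comp_Sgens_iff: "1 \<le> n \<Longrightarrow> s \<in> Sgens n \<Longrightarrow> y \<circ> s \<in> Wn n \<longleftrightarrow> y \<in> Wn n"
  by (metis Sgens_Wn Sgens_comp_self Wn_comp)

lemma Sgens_comp_Wn_iff: "1 \<le> n \<Longrightarrow> s \<in> Sgens n \<Longrightarrow> s \<circ> y \<in> Wn n \<longleftrightarrow> y \<in> Wn n"
proof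
  assume "1 \<le> n" "s \<in> Sgens n" "s \<circ> y \<in> Wn n"
  moreover have "s \<circ> (s \<circ> y) = y"
    using \<open>s \<in> Sgens n\<close> by (simp add: fun_eq_iff Sgens_involutive)
  ultimately show "y \<in> Wn n"
    by (metis Sgens_Wn Wn_comp)
qed (simp add: Sgens_Wn Wn_comp)

lemma word_prod_Nil [simp]: "word_prod [] = id"
  by (simp add: word_prod_def)

lemma word_prod_Cons [simp]: "word_prod (s # ws) = s \<circ> word_prod ws"
  by (simp add: word_prod_def)

lemma word_prod_snoc: "word_prod (ws @ [s]) = word_prod ws \<circ> s"
  by (induction ws) auto

lemma word_prod_Wn: "1 \<le> n \<Longrightarrow> set ws \<subseteq> Sgens n \<Longrightarrow> word_prod ws \<in> Wn n"
  by (induction ws) (auto simp: Sgens_comp_Wn_iff)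

lemma word_prod_rev_comp: "set ws \<subseteq> Sgens n \<Longrightarrow> word_prod (rev ws) \<circ> word_prod ws = id"
  by (induction ws) (auto simp: word_prod_snoc fun_eq_iff Sgens_involutive)

lemma inv_word_prod:
  assumes "set ws \<subseteq> Sgens n"
  shows "inv (word_prod ws) = word_prod (rev ws)"
  using word_prod_rev_comp[of ws n] word_prod_rev_comp[of "rev ws" n] assms
  by (intro inv_unique_comp) auto

section \<open>The length function\<close>

definition transposition :: "int \<Rightarrow> int \<Rightarrow> int \<Rightarrow> int" where
  "transposition u v = (\<lambda>j. if j = u then v else if j = v then u else j)"

definition inversions :: "nat \<Rightarrow> (int \<Rightarrow> int) \<Rightarrow> int" where
  "inversions n y = (\<Sum>p\<in>signed_dom n. \<Sum>q\<in>signed_dom n. if p < q \<and> y q < y p then 1 else 0)"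

definition negatives :: "nat \<Rightarrow> (int \<Rightarrow> int) \<Rightarrow> int" where
  "negatives n y = (\<Sum>p\<in>{1..int n}. if y p < 0 then 1 else 0)"

definition inversion_length :: "nat \<Rightarrow> (int \<Rightarrow> int) \<Rightarrow> int" where
  "inversion_length n y = inversions n y + negatives n y"

lemma transposition_transposition [simp]: "transposition u v (transposition u v x) = x"
  by (simp add: transposition_def)

lemma bij_betw_transposition: "u \<in> S \<Longrightarrow> v \<in> S \<Longrightarrow> bij_betw (transposition u v) S S"
  by (rule bij_betw_byWitness[where f' = "transposition u v"]) (auto simp: transposition_def)

lemma inversions_comp_transposition:
  assumes u: "u \<in> signed_dom n" and v: "v \<in> signed_dom n" and "u < v"
    and adjacent: "\<forall>x\<in>signed_dom n. x \<le> u \<or> v \<le> x"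
  shows "inversions n (y \<circ> transposition u v)
    = inversions n y - (if y v < y u then 1 else 0) + (if y u < y v then 1 else 0)"
proof -
  let ?t = "transposition u v" and ?S = "signed_dom n"
  define G where "G = (\<lambda>(p, q). if p < q \<and> y q < y p then 1 else (0::int))"
  define H where "H = (\<lambda>(p, q). if ?t p < ?t q \<and> y q < y p then 1 else (0::int))"
  have bij: "bij_betw ?t ?S ?S"
    using bij_betw_transposition[OF u v] .
  have "inversions n (y \<circ> ?t) = (\<Sum>p\<in>?S. \<Sum>q\<in>?S. H (?t p, ?t q))"
    by (simp add: inversions_def H_def)
  also have "\<dots> = (\<Sum>p\<in>?S. \<Sum>q\<in>?S. H (p, q))"
    using sum.reindex_bij_betw[OF bij, where g = "\<lambda>p. \<Sum>q\<in>?S. H (p, q)"]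
      sum.reindex_bij_betw[OF bij, where g = "\<lambda>q. H (?t _, q)"]
    by simp
  also have "\<dots> = (\<Sum>x\<in>?S \<times> ?S. G x) + (\<Sum>x\<in>?S \<times> ?S. H x - G x)"
    by (simp add: sum.cartesian_product sum.distrib[symmetric])
  also have "(\<Sum>x\<in>?S \<times> ?S. H x - G x) = (\<Sum>x\<in>{(u, v), (v, u)}. H x - G x)"
  proof (rule sum.mono_neutral_right)
    show "\<forall>x\<in>?S \<times> ?S - {(u, v), (v, u)}. H x - G x = 0"
    proof
      fix x
      assume x: "x \<in> ?S \<times> ?S - {(u, v), (v, u)}"
      obtain p q where pq: "x = (p, q)"
        by (cases x)
      have "?t p < ?t q \<longleftrightarrow> p < q"
        using x adjacent[rule_format, of p] adjacent[rule_format, of q] \<open>u < v\<close>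
        unfolding pq transposition_def by auto
      then show "H x - G x = 0"
        by (simp add: H_def G_def pq)
    qed
  qed (use u v in auto)
  also have "\<dots> = - (if y v < y u then 1 else 0) + (if y u < y v then 1 else 0)"
    using \<open>u < v\<close> by (simp add: H_def G_def transposition_def)
  finally show ?thesis
    by (simp add: inversions_def G_def sum.cartesian_product)
qed

lemma sgen_eq_transpositions: "0 < i \<Longrightarrow> sgen i = transposition i (i + 1) \<circ> transposition (- i - 1) (- i)"
  by (auto simp: sgen_def transposition_def fun_eq_iff)

lemma inversions_comp_sgen:
  assumes y: "y \<in> Wn n" and i: "1 \<le> i" "i \<le> int n - 1"
  shows "inversions n (y \<circ> sgen i)
    = inversions n y - 2 * (if y (i + 1) < y i then 1 else 0) + 2 * (if y i < y (i + 1) then 1 else 0)"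
proof -
  let ?y' = "y \<circ> transposition i (i + 1)"
  have dom: "i \<in> signed_dom n" "i + 1 \<in> signed_dom n" "- i - 1 \<in> signed_dom n" "- i \<in> signed_dom n"
    using i by (auto simp: in_signed_dom)
  have "y (- i - 1) = y (- (i + 1))"
    by (rule arg_cong[where f = y]) linarith
  then have odd: "y (- i) = - y i" "y (- i - 1) = - y (i + 1)"
    using Wn_odd[OF y, of i] Wn_odd[OF y, of "i + 1"] by simp_all
  have y': "?y' (- i) = - y i" "?y' (- i - 1) = - y (i + 1)"
    using i odd by (auto simp: transposition_def)
  have "y \<circ> sgen i = ?y' \<circ> transposition (- i - 1) (- i)"
    using i by (simp add: sgen_eq_transpositions comp_assoc)
  moreover have "inversions n (?y' \<circ> transposition (- i - 1) (- i))
      = inversions n ?y' - (if ?y' (- i) < ?y' (- i - 1) then 1 else 0)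
        + (if ?y' (- i - 1) < ?y' (- i) then 1 else 0)"
    by (rule inversions_comp_transposition[OF dom(3,4)]) auto
  ultimately have "inversions n (y \<circ> sgen i)
      = inversions n ?y' - (if y (i + 1) < y i then 1 else 0) + (if y i < y (i + 1) then 1 else 0)"
    unfolding y' by simp
  moreover have "inversions n ?y'
      = inversions n y - (if y (i + 1) < y i then 1 else 0) + (if y i < y (i + 1) then 1 else 0)"
    by (rule inversions_comp_transposition[OF dom(1,2)]) auto
  ultimately show ?thesis by linarith
qed

lemma negatives_comp_sgen:
  assumes "1 \<le> i" "i \<le> int n - 1"
  shows "negatives n (y \<circ> sgen i) = negatives n y"
proof -
  have "bij_betw (sgen i) {1..int n} {1..int n}"
    by (rule bij_betw_byWitness[where f' = "sgen i"]) (use assms in \<open>auto simp: sgen_def\<close>)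
  then show ?thesis
    unfolding negatives_def comp_def by (rule sum.reindex_bij_betw)
qed

lemma inversions_comp_tgen:
  assumes "1 \<le> n"
  shows "inversions n (y \<circ> tgen)
    = inversions n y - (if y 1 < y (- 1) then 1 else 0) + (if y (- 1) < y 1 then 1 else 0)"
proof -
  have "- 1 \<in> signed_dom n" "1 \<in> signed_dom n" "\<forall>x\<in>signed_dom n. x \<le> - 1 \<or> 1 \<le> x"
    using assms by (auto simp: in_signed_dom)
  moreover have "tgen = transposition (- 1) 1"
    by (auto simp: tgen_def transposition_def fun_eq_iff)
  ultimately show ?thesis
    using inversions_comp_transposition[of "- 1" n 1 y] by simp
qed

lemma negatives_comp_tgen:
  assumes "1 \<le> n"
  shows "negatives n (y \<circ> tgen) = negatives n y - (if y 1 < 0 then 1 else 0) + (if y (- 1) < 0 then 1 else 0)"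
proof -
  have "{1..int n} = insert 1 {2..int n}"
    using assms by auto
  moreover have "(\<Sum>p\<in>{2..int n}. if (y \<circ> tgen) p < 0 then 1 else 0) = (\<Sum>p\<in>{2..int n}. if y p < 0 then 1 else (0::int))"
    by (intro sum.cong) (auto simp: tgen_def)
  ultimately show ?thesis
    unfolding negatives_def by (simp add: tgen_def)
qed

lemma inversion_length_comp_sgen:
  assumes y: "y \<in> Wn n" and i: "1 \<le> i" "i \<le> int n - 1"
  shows "inversion_length n (y \<circ> sgen i) = inversion_length n y + (if y i < y (i + 1) then 2 else - 2)"
  using inversions_comp_sgen[OF y i] negatives_comp_sgen[OF i, of y] Wn_inj_eq[OF y, of i "i + 1"]
  by (auto simp: inversion_length_def)

lemma inversion_length_comp_tgen:
  assumes y: "y \<in> Wn n" and n: "1 \<le> n"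
  shows "inversion_length n (y \<circ> tgen) = inversion_length n y + (if 0 < y 1 then 2 else - 2)"
  using inversions_comp_tgen[OF n, of y] negatives_comp_tgen[OF n, of y] Wn_nonzero[OF y, of 1] n Wn_odd[OF y, of 1]
  by (auto simp: inversion_length_def)

lemma inversion_length_comp_Sgens_le:
  "1 \<le> n \<Longrightarrow> y \<in> Wn n \<Longrightarrow> s \<in> Sgens n \<Longrightarrow> inversion_length n (y \<circ> s) \<le> inversion_length n y + 2"
  by (auto elim!: Sgens_cases simp: inversion_length_comp_sgen inversion_length_comp_tgen)

lemma inversion_length_id [simp]: "inversion_length n id = 0"
  unfolding inversion_length_def inversions_def negatives_def by (auto intro!: sum.neutral)

lemma inversion_length_nonneg: "0 \<le> inversion_length n y"
  unfolding inversion_length_def inversions_def negatives_def by (intro add_nonneg_nonneg sum_nonneg) auto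

lemma inversion_length_word_prod:
  "1 \<le> n \<Longrightarrow> set ws \<subseteq> Sgens n \<Longrightarrow> inversion_length n (word_prod ws) \<le> 2 * int (length ws)"
proof (induction ws rule: rev_induct)
  case Nil
  show ?case
    by (simp only: word_prod_Nil inversion_length_id list.size)
next
  case (snoc s ws)
  then have "inversion_length n (word_prod (ws @ [s])) \<le> inversion_length n (word_prod ws) + 2"
    unfolding word_prod_snoc by (intro inversion_length_comp_Sgens_le) (auto intro: word_prod_Wn)
  then show ?case
    using snoc by simp
qed

lemma Wn_no_descent_eq_id:
  assumes y: "y \<in> Wn n" and "0 < y 1" and ascent: "\<And>i. 1 \<le> i \<Longrightarrow> i \<le> int n - 1 \<Longrightarrow> y i < y (i + 1)"
  shows "y = id"
proof -
  have lower: "k \<le> int n \<longrightarrow> k \<le> y k" if "1 \<le> k" for k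
    using that
  proof (induction k rule: int_ge_induct)
    case (step i)
    then show ?case using ascent[of i] by auto
  qed (use \<open>0 < y 1\<close> in simp)
  have upper: "1 \<le> k \<longrightarrow> y k \<le> k" if "k \<le> int n" for k
    using that
  proof (induction k rule: int_le_induct)
    case base
    then show ?case using Wn_signed_dom[OF y, of "int n"] by (auto simp: in_signed_dom)
  next
    case (step i)
    then show ?case using ascent[of "i - 1"] by auto
  qed
  have "y k = k" if "1 \<le> \<bar>k\<bar>" "\<bar>k\<bar> \<le> int n" for k
    using lower[of "\<bar>k\<bar>"] upper[of "\<bar>k\<bar>"] that Wn_odd[OF y, of k] by (cases "0 < k") auto
  then show ?thesis
    using Wn_fixes_outside[OF y] by (auto simp: fun_eq_iff in_signed_dom)
qed

lemma exists_descent: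
  assumes n: "1 \<le> n" and y: "y \<in> Wn n" and "y \<noteq> id"
  obtains s where "s \<in> Sgens n" "inversion_length n (y \<circ> s) = inversion_length n y - 2"
proof -
  consider "\<not> 0 < y 1" | i where "1 \<le> i" "i \<le> int n - 1" "\<not> y i < y (i + 1)"
    using Wn_no_descent_eq_id[OF y] \<open>y \<noteq> id\<close> by blast
  then show ?thesis
  proof cases
    case 1
    then show ?thesis
      using that[of tgen] inversion_length_comp_tgen[OF y n] by (simp add: Sgens_def)
  next
    case (2 i)
    then show ?thesis
      using that[of "sgen i"] inversion_length_comp_sgen[OF y 2(1,2)] by (auto simp: Sgens_def)
  qed
qed

lemma exists_word_inversion_length:
  assumes n: "1 \<le> n" and y: "y \<in> Wn n"
  shows "\<exists>ws. set ws \<subseteq> Sgens n \<and> word_prod ws = y \<and> 2 * int (length ws) = inversion_length n y"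
  using y
proof (induction "nat (inversion_length n y)" arbitrary: y rule: less_induct)
  case less
  show ?case
  proof (cases "y = id")
    case True
    then show ?thesis
      by (intro exI[of _ "[]"]) simp
  next
    case False
    then obtain s where s: "s \<in> Sgens n" "inversion_length n (y \<circ> s) = inversion_length n y - 2"
      using exists_descent[OF n less.prems] by blast
    moreover have "y \<circ> s \<in> Wn n"
      using Wn_comp_Sgens_iff[OF n s(1)] less.prems by simp
    moreover have "nat (inversion_length n (y \<circ> s)) < nat (inversion_length n y)"
      using s(2) inversion_length_nonneg[of n "y \<circ> s"] by linarith
    ultimately obtain ws where "set ws \<subseteq> Sgens n" "word_prod ws = y \<circ> s"
        "2 * int (length ws) = inversion_length n (y \<circ> s)"
      using less.hyps by blast
    then show ?thesis
      using s Sgens_comp_self[OF s(1), of y]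
      by (intro exI[of _ "ws @ [s]"]) (auto simp: word_prod_snoc)
  qed
qed

lemma clen_le: "set ws \<subseteq> Sgens n \<Longrightarrow> word_prod ws = y \<Longrightarrow> clen n y \<le> length ws"
  unfolding clen_def by (rule Least_le) blast

lemma exists_reduced_word:
  assumes "1 \<le> n" and "y \<in> Wn n"
  obtains ws where "length ws = clen n y" "set ws \<subseteq> Sgens n" "word_prod ws = y"
proof -
  have "\<exists>k ws. length ws = k \<and> set ws \<subseteq> Sgens n \<and> word_prod ws = y"
    using exists_word_inversion_length[OF assms] by blast
  then have "\<exists>ws. length ws = clen n y \<and> set ws \<subseteq> Sgens n \<and> word_prod ws = y"
    unfolding clen_def by (rule LeastI_ex)
  then show ?thesis
    using that by blast
qed

lemma inversion_length_eq_clen: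
  assumes n: "1 \<le> n" and y: "y \<in> Wn n"
  shows "inversion_length n y = 2 * int (clen n y)"
proof -
  obtain ws where "set ws \<subseteq> Sgens n" "word_prod ws = y" "2 * int (length ws) = inversion_length n y"
    using exists_word_inversion_length[OF n y] by blast
  moreover obtain vs where "length vs = clen n y" "set vs \<subseteq> Sgens n" "word_prod vs = y"
    using exists_reduced_word[OF n y] .
  ultimately show ?thesis
    using clen_le[of ws n y] inversion_length_word_prod[OF n, of vs] by simp
qed

lemma clen_comp_sgen:
  assumes n: "1 \<le> n" and y: "y \<in> Wn n" and i: "1 \<le> i" "i \<le> int n - 1"
  shows "int (clen n (y \<circ> sgen i)) = int (clen n y) + (if y i < y (i + 1) then 1 else - 1)"
  using inversion_length_eq_clen[OF n y] inversion_length_eq_clen[OF n Wn_comp[OF y sgen_Wn[OF i]]]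
    inversion_length_comp_sgen[OF y i]
  by auto

lemma clen_comp_tgen:
  assumes n: "1 \<le> n" and y: "y \<in> Wn n"
  shows "int (clen n (y \<circ> tgen)) = int (clen n y) + (if 0 < y 1 then 1 else - 1)"
  using inversion_length_eq_clen[OF n y] inversion_length_eq_clen[OF n Wn_comp[OF y tgen_Wn[OF n]]]
    inversion_length_comp_tgen[OF y n]
  by auto

lemma clen_comp_Sgens:
  assumes "1 \<le> n" and "y \<in> Wn n" and s: "s \<in> Sgens n"
  shows "clen n (y \<circ> s) = clen n y + 1 \<or> clen n y = clen n (y \<circ> s) + 1"
  using s
proof (cases rule: Sgens_cases)
  case 1
  then show ?thesis
    using clen_comp_tgen[OF assms(1,2)] by (auto split: if_splits)
next
  case (2 i)
  then show ?thesis
    using clen_comp_sgen[OF assms(1,2) 2(1,2)] by (auto split: if_splits)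
qed

lemma clen_comp_Sgens_less_iff:
  "1 \<le> n \<Longrightarrow> y \<in> Wn n \<Longrightarrow> s \<in> Sgens n \<Longrightarrow> clen n (y \<circ> s) < clen n y \<longleftrightarrow> \<not> clen n y < clen n (y \<circ> s)"
  using clen_comp_Sgens by fastforce

lemma clen_id [simp]: "clen n id = 0"
  using clen_le[of "[]" n id] by simp

lemma clen_eq_0_iff:
  assumes "1 \<le> n" and "y \<in> Wn n"
  shows "clen n y = 0 \<longleftrightarrow> y = id"
proof
  assume "clen n y = 0"
  then show "y = id"
    using exists_reduced_word[OF assms] by (metis length_0_conv word_prod_Nil)
qed simp

lemma clen_inv:
  assumes n: "1 \<le> n" and y: "y \<in> Wn n"
  shows "clen n (inv y) = clen n y"
proof -
  have le: "clen n (inv x) \<le> clen n x" if x: "x \<in> Wn n" for x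
  proof -
    obtain ws where "length ws = clen n x" "set ws \<subseteq> Sgens n" "word_prod ws = x"
      using exists_reduced_word[OF n x] .
    then show ?thesis
      using clen_le[of "rev ws" n "inv x"] inv_word_prod[of ws n] by simp
  qed
  show ?thesis
    using le[OF y] le[OF Wn_inv[OF y]] inv_inv_eq[OF Wn_bij[OF y]] by simp
qed

definition reduced_word :: "nat \<Rightarrow> (int \<Rightarrow> int) list \<Rightarrow> bool" where
  "reduced_word n ws \<longleftrightarrow> set ws \<subseteq> Sgens n \<and> length ws = clen n (word_prod ws)"

lemma reduced_word_ConsD:
  assumes n: "1 \<le> n" and red: "reduced_word n (s # ws)"
  shows "reduced_word n ws"
proof -
  have s: "s \<in> Sgens n" and ws: "set ws \<subseteq> Sgens n"
    using red by (auto simp: reduced_word_def)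
  obtain vs where vs: "length vs = clen n (word_prod ws)" "set vs \<subseteq> Sgens n" "word_prod vs = word_prod ws"
    using exists_reduced_word[OF n word_prod_Wn[OF n ws]] .
  have "clen n (word_prod (s # ws)) \<le> length (s # vs)"
    using s vs by (intro clen_le) auto
  moreover have "clen n (word_prod ws) \<le> length ws"
    using ws by (rule clen_le) simp
  ultimately show ?thesis
    using red vs by (simp add: reduced_word_def)
qed

lemma reduced_word_snocD:
  assumes n: "1 \<le> n" and red: "reduced_word n (ws @ [s])"
  shows "reduced_word n ws"
proof -
  have s: "s \<in> Sgens n" and ws: "set ws \<subseteq> Sgens n"
    using red by (auto simp: reduced_word_def)
  obtain vs where vs: "length vs = clen n (word_prod ws)" "set vs \<subseteq> Sgens n" "word_prod vs = word_prod ws"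
    using exists_reduced_word[OF n word_prod_Wn[OF n ws]] .
  have "clen n (word_prod (ws @ [s])) \<le> length (vs @ [s])"
    using s vs by (intro clen_le) (auto simp: word_prod_snoc)
  moreover have "clen n (word_prod ws) \<le> length ws"
    using ws by (rule clen_le) simp
  ultimately show ?thesis
    using red vs by (simp add: reduced_word_def)
qed

lemma reduced_word_rev:
  assumes n: "1 \<le> n" and red: "reduced_word n ws"
  shows "reduced_word n (rev ws)"
proof -
  have ws: "set ws \<subseteq> Sgens n"
    using red by (simp add: reduced_word_def)
  have "clen n (word_prod (rev ws)) = clen n (word_prod ws)"
    using clen_inv[OF n word_prod_Wn[OF n ws]] inv_word_prod[OF ws] by simp
  then show ?thesis
    using red by (simp add: reduced_word_def)
qed

lemma red_word:
  assumes "1 \<le> n" and "x \<in> Wn n"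
  shows "reduced_word n (red_word n x)" and "word_prod (red_word n x) = x"
proof -
  obtain ws where "length ws = clen n x" "set ws \<subseteq> Sgens n" "word_prod ws = x"
    using exists_reduced_word[OF assms] .
  then have "\<exists>ws. set ws \<subseteq> Sgens n \<and> word_prod ws = x \<and> length ws = clen n x"
    by blast
  then have "set (red_word n x) \<subseteq> Sgens n \<and> word_prod (red_word n x) = x \<and> length (red_word n x) = clen n x"
    unfolding red_word_def by (rule someI_ex)
  then show "reduced_word n (red_word n x)" and "word_prod (red_word n x) = x"
    by (simp_all add: reduced_word_def)
qed

section \<open>Descents\<close>

lemma Wn_neq_uminus:
  assumes y: "y \<in> Wn n" and "0 < u" "0 < v"
  shows "y u \<noteq> - y v"
proof
  assume "y u = - y v"
  then have "u = - v"
    using Wn_inj_eq[OF y, of u "- v"] Wn_odd[OF y, of v] by simp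
  with assms(2,3) show False by simp
qed

lemma clen_comp_tgen_less_iff:
  assumes n: "1 \<le> n" and y: "y \<in> Wn n"
  shows "clen n (y \<circ> tgen) < clen n y \<longleftrightarrow> y 1 < 0"
  using clen_comp_tgen[OF n y] Wn_nonzero[OF y, of 1] n by (auto split: if_splits)

lemma clen_comp_sgen_less_iff:
  assumes n: "1 \<le> n" and y: "y \<in> Wn n" and i: "1 \<le> i" "i \<le> int n - 1"
  shows "clen n (y \<circ> sgen i) < clen n y \<longleftrightarrow> y (i + 1) < y i"
  using clen_comp_sgen[OF n y i] Wn_inj_eq[OF y, of i "i + 1"] by (auto split: if_splits)

lemma sgen_uminus: "0 < k \<Longrightarrow> sgen k (- v) = - sgen k v"
  by (auto simp: sgen_def)

lemma sgen_comp_eq_comp_sgen: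
  assumes y: "y \<in> Wn n" and "1 \<le> k" "1 \<le> j"
    and yj: "y j \<in> {k, k + 1, - k, - k - 1}" and yj1: "y (j + 1) = sgen k (y j)"
  shows "sgen k \<circ> y = y \<circ> sgen j"
proof
  fix x
  have "y (- j - 1) = y (- (j + 1))"
    by (rule arg_cong[where f = y]) linarith
  then have odd: "y (- j) = - y j" "y (- j - 1) = - y (j + 1)"
    using Wn_odd[OF y, of j] Wn_odd[OF y, of "j + 1"] by simp_all
  have orbit: "{k, k + 1, - k, - k - 1} = {y j, y (j + 1), y (- j), y (- j - 1)}"
    using yj unfolding yj1 odd by (auto simp: sgen_def)
  have sgen_j: "sgen j j = j + 1" "sgen j (j + 1) = j" "sgen j (- j) = - j - 1" "sgen j (- j - 1) = - j"
    using \<open>1 \<le> j\<close> by (simp_all add: sgen_def)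
  show "(sgen k \<circ> y) x = (y \<circ> sgen j) x"
  proof (cases "x \<in> {j, j + 1, - j, - j - 1}")
    case True
    then show ?thesis
      using yj1 odd sgen_j sgen_uminus[of k] \<open>1 \<le> k\<close> by auto
  next
    case False
    then have "y x \<notin> {k, k + 1, - k, - k - 1}"
      unfolding orbit using Wn_inj_eq[OF y] by blast
    then show ?thesis
      using False by (auto simp: sgen_def)
  qed
qed
lemma tgen_comp_eq_comp_tgen:
  assumes y: "y \<in> Wn n" and "y 1 = 1 \<or> y 1 = - 1"
  shows "tgen \<circ> y = y \<circ> tgen"
proof
  fix x
  show "(tgen \<circ> y) x = (y \<circ> tgen) x"
    using assms Wn_odd[OF y, of 1] Wn_inj_eq[OF y, of x 1] Wn_inj_eq[OF y, of x "- 1"]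
    by (cases "x = 1 \<or> x = - 1") (auto simp: tgen_def)
qed

lemma sgen_less_sgen_iff:
  assumes "1 \<le> k" and "u \<noteq> v" and "\<not> (u \<in> {k, k + 1, - k, - k - 1} \<and> v = sgen k u)"
  shows "sgen k v < sgen k u \<longleftrightarrow> v < u"
  using assms by (auto simp: sgen_def)

lemma tgen_less_tgen_iff: "u \<noteq> v \<Longrightarrow> u \<noteq> - v \<Longrightarrow> u \<noteq> 0 \<Longrightarrow> v \<noteq> 0 \<Longrightarrow> tgen v < tgen u \<longleftrightarrow> v < u"
  by (auto simp: tgen_def)

lemma sgen_less_0_iff: "0 < k \<Longrightarrow> sgen k v < 0 \<longleftrightarrow> v < 0"
  by (auto simp: sgen_def)

lemma Sgens_comp_neg_1_iff:
  assumes y: "y \<in> Wn n" and s: "s \<in> Sgens n" and ne: "s \<circ> y \<noteq> y \<circ> tgen"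
  shows "(s \<circ> y) 1 < 0 \<longleftrightarrow> y 1 < 0"
  using s
proof (cases rule: Sgens_cases)
  case 1
  then have "y 1 \<noteq> 1 \<and> y 1 \<noteq> - 1"
    using ne tgen_comp_eq_comp_tgen[OF y] by auto
  then show ?thesis
    using \<open>s = tgen\<close> by (auto simp: tgen_def)
qed (simp add: sgen_less_0_iff)

lemma Sgens_comp_adjacent_less_iff:
  assumes y: "y \<in> Wn n" and s: "s \<in> Sgens n" and j: "1 \<le> j" "j \<le> int n - 1"
    and ne: "s \<circ> y \<noteq> y \<circ> sgen j"
  shows "(s \<circ> y) (j + 1) < (s \<circ> y) j \<longleftrightarrow> y (j + 1) < y j"
proof -
  have yj: "y j \<noteq> y (j + 1)" "y j \<noteq> - y (j + 1)" "y j \<noteq> 0" "y (j + 1) \<noteq> 0"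
    using Wn_inj_eq[OF y, of j "j + 1"] Wn_neq_uminus[OF y, of j "j + 1"]
      Wn_nonzero[OF y, of j] Wn_nonzero[OF y, of "j + 1"] j
    by auto
  show ?thesis
    using s
  proof (cases rule: Sgens_cases)
    case 1
    then show ?thesis
      using yj tgen_less_tgen_iff[of "y j" "y (j + 1)"] by simp
  next
    case (2 k)
    then have "\<not> (y j \<in> {k, k + 1, - k, - k - 1} \<and> y (j + 1) = sgen k (y j))"
      using sgen_comp_eq_comp_sgen[OF y 2(1) j(1)] ne by blast
    then show ?thesis
      using \<open>s = sgen k\<close> sgen_less_sgen_iff[OF \<open>1 \<le> k\<close> yj(1)] by simp
  qed
qed

text \<open>Left multiplication by \<open>s\<close> only swaps the values \<open>k, k + 1\<close> (or \<open>\<plusminus>1\<close>), and the two positions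
  compared by \<open>t\<close> carry such a pair exactly when \<open>s y = y t\<close>.\<close>
lemma clen_right_descent_comp_left:
  assumes n: "1 \<le> n" and y: "y \<in> Wn n" and s: "s \<in> Sgens n" and t: "t \<in> Sgens n"
    and ne: "s \<circ> y \<noteq> y \<circ> t"
  shows "clen n (s \<circ> y \<circ> t) < clen n (s \<circ> y) \<longleftrightarrow> clen n (y \<circ> t) < clen n y"
proof -
  have sy: "s \<circ> y \<in> Wn n"
    using Sgens_comp_Wn_iff[OF n s] y by simp
  show ?thesis
    using t
  proof (cases rule: Sgens_cases)
    case 1
    then show ?thesis
      using Sgens_comp_neg_1_iff[OF y s] ne clen_comp_tgen_less_iff[OF n y] clen_comp_tgen_less_iff[OF n sy]
      by simp
  next
    case (2 j)
    then show ?thesis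
      using Sgens_comp_adjacent_less_iff[OF y s 2(1,2)] ne
        clen_comp_sgen_less_iff[OF n y 2(1,2)] clen_comp_sgen_less_iff[OF n sy 2(1,2)]
      by simp
  qed
qed

lemma clen_left_descent_comp_right:
  assumes n: "1 \<le> n" and y: "y \<in> Wn n" and s: "s \<in> Sgens n" and t: "t \<in> Sgens n"
    and ne: "s \<circ> y \<noteq> y \<circ> t"
  shows "clen n (s \<circ> y \<circ> t) < clen n (y \<circ> t) \<longleftrightarrow> clen n (s \<circ> y) < clen n y"
proof -
  let ?z = "inv y"
  have bij: "bij s" "bij t" "bij y"
    using Sgens_Wn[OF n s] Sgens_Wn[OF n t] y by (auto intro: Wn_bij)
  have yz: "?z \<circ> y = id" "y \<circ> ?z = id"
    using inv_o_cancel[OF bij_is_inj[OF bij(3)]] bij_is_surj[OF bij(3)] surj_iff by blast+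
  have "t \<circ> ?z \<noteq> ?z \<circ> s"
  proof
    assume conj: "t \<circ> ?z = ?z \<circ> s"
    have "y \<circ> t = y \<circ> (t \<circ> ?z) \<circ> y"
      using yz by (simp add: comp_assoc)
    also have "\<dots> = y \<circ> (?z \<circ> s) \<circ> y"
      by (simp only: conj)
    also have "\<dots> = s \<circ> y"
      using yz by (simp flip: comp_assoc)
    finally show False
      using ne by simp
  qed
  then have "clen n (t \<circ> ?z \<circ> s) < clen n (t \<circ> ?z) \<longleftrightarrow> clen n (?z \<circ> s) < clen n ?z"
    using clen_right_descent_comp_left[OF n Wn_inv[OF y] t s] by blast
  moreover have "inv (s \<circ> y) = ?z \<circ> s" "inv (s \<circ> y \<circ> t) = t \<circ> ?z \<circ> s" "inv (y \<circ> t) = t \<circ> ?z"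
    using bij inv_Sgens[OF s] inv_Sgens[OF t] by (simp_all add: o_inv_distrib bij_comp comp_assoc)
  moreover have "s \<circ> y \<in> Wn n" "s \<circ> y \<circ> t \<in> Wn n" "y \<circ> t \<in> Wn n"
    using y Sgens_comp_Wn_iff[OF n s] Wn_comp_Sgens_iff[OF n t] by simp_all
  ultimately show ?thesis
    using clen_inv[OF n] y by metis
qed

lemma Sgens_conj_tgen_iff:
  assumes y: "y \<in> Wn n" and s: "s \<in> Sgens n" and t: "t \<in> Sgens n" and eq: "s \<circ> y = y \<circ> t"
  shows "s = tgen \<longleftrightarrow> t = tgen"
proof -
  have not_tgen_sgen: False if "tgen \<circ> y = y \<circ> sgen j" "1 \<le> j" "j \<le> int n - 1" for j
  proof -
    have "tgen (y j) = y (j + 1)"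
      using fun_cong[OF that(1), of j] that(2) by (simp add: sgen_def)
    moreover have "y j \<noteq> y (j + 1)" "y j \<noteq> - y (j + 1)"
      using Wn_inj_eq[OF y, of j "j + 1"] Wn_neq_uminus[OF y, of j "j + 1"] that(2) by auto
    ultimately show False
      by (auto simp: tgen_def split: if_splits)
  qed
  have not_sgen_tgen: False if "sgen k \<circ> y = y \<circ> tgen" "1 \<le> k" "k \<le> int n - 1" for k
  proof -
    have "sgen k (y 1) = - y 1"
      using fun_cong[OF that(1), of 1] Wn_odd[OF y, of 1] by (simp add: tgen_def)
    moreover have "y 1 \<noteq> 0"
      using Wn_nonzero[OF y, of 1] that(2,3) by simp
    ultimately show False
      using that(2) unfolding sgen_def
      by (cases "y 1 = k"; cases "y 1 = k + 1"; cases "y 1 = - k"; cases "y 1 = - k - 1") auto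
  qed
  show ?thesis
  proof
    assume "s = tgen"
    with t eq not_tgen_sgen show "t = tgen"
      by (cases rule: Sgens_cases) auto
  next
    assume "t = tgen"
    with s eq not_sgen_tgen show "s = tgen"
      by (cases rule: Sgens_cases) auto
  qed
qed

section \<open>Multiplication operators on the Hecke algebra\<close>

locale hecke_Bn =
  fixes n :: nat and a b :: "'g::linordered_ab_group_add"
  assumes n: "1 \<le> n"

definition Wn_supported :: "nat \<Rightarrow> ((int \<Rightarrow> int) \<Rightarrow> 'b::zero) \<Rightarrow> bool" where
  "Wn_supported n m \<longleftrightarrow> (\<forall>y. y \<notin> Wn n \<longrightarrow> m y = 0)"

definition vdiff :: "'g::linordered_ab_group_add \<Rightarrow> 'g \<Rightarrow> (int \<Rightarrow> int) \<Rightarrow> 'g grpring" where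
  "vdiff a b s = vpar a b s - vinv a b s"

definition lmulT :: "nat \<Rightarrow> 'g::linordered_ab_group_add \<Rightarrow> 'g \<Rightarrow> (int \<Rightarrow> int) \<Rightarrow> 'g hmod \<Rightarrow> 'g hmod" where
  "lmulT n a b s m = (\<lambda>y. m (s \<circ> y) + (if clen n (s \<circ> y) < clen n y then vdiff a b s * m y else 0))"

text \<open>Right multiplication by \<open>C\<^sub>s = T\<^sub>s + v\<^sub>s\<^sup>-\<^sup>1\<close>.\<close>
definition rmulC :: "nat \<Rightarrow> 'g::linordered_ab_group_add \<Rightarrow> 'g \<Rightarrow> (int \<Rightarrow> int) \<Rightarrow> 'g hmod \<Rightarrow> 'g hmod" where
  "rmulC n a b s m = (\<lambda>y. rmulT n a b s m y + vinv a b s * m y)"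

lemma rmulT_eq:
  "rmulT n a b s m y = m (y \<circ> s) + (if clen n (y \<circ> s) < clen n y then vdiff a b s * m y else 0)"
  by (simp add: rmulT_def vdiff_def)

lemma rmulTinv_eq: "rmulTinv n a b s m = (\<lambda>y. rmulT n a b s m y - vdiff a b s * m y)"
  by (simp add: rmulTinv_def vdiff_def)

lemma rmulT_nonzero: "rmulT n a b s m y \<noteq> 0 \<Longrightarrow> m (y \<circ> s) \<noteq> 0 \<or> m y \<noteq> 0"
  by (auto simp: rmulT_eq split: if_splits)

lemma rmulTinv_nonzero: "rmulTinv n a b s m y \<noteq> 0 \<Longrightarrow> m (y \<circ> s) \<noteq> 0 \<or> m y \<noteq> 0"
  by (auto simp: rmulTinv_eq rmulT_eq split: if_splits)

lemma rmulC_nonzero: "rmulC n a b s m y \<noteq> 0 \<Longrightarrow> m (y \<circ> s) \<noteq> 0 \<or> m y \<noteq> 0"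
  using rmulT_nonzero[of n a b s m y] by (auto simp: rmulC_def)

lemma barA_vdiff: "barA (vdiff a b s) = - vdiff a b s"
  by (simp add: vdiff_def vpar_def vinv_def barA_diff barA_expo)

lemma barA_vinv: "barA (vinv a b s) = vpar a b s"
  by (simp add: vpar_def vinv_def barA_expo)

lemma vpar_sgen: "1 \<le> i \<Longrightarrow> vpar a b (sgen i) = expo a"
  by (simp add: vpar_def tgen_neq_sgen[symmetric])

lemma vinv_sgen: "1 \<le> i \<Longrightarrow> vinv a b (sgen i) = expo (- a)"
  by (simp add: vinv_def tgen_neq_sgen[symmetric])

lemma rmulT_sum:
  "rmulT n a b s (\<lambda>z. \<Sum>i\<in>S. f i * g i z) = (\<lambda>z. \<Sum>i\<in>S. f i * rmulT n a b s (g i) z)"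
  by (auto simp: rmulT_eq fun_eq_iff sum.distrib sum_distrib_left algebra_simps)

lemma rmulTinv_sum:
  "rmulTinv n a b s (\<lambda>z. \<Sum>i\<in>S. f i * g i z) = (\<lambda>z. \<Sum>i\<in>S. f i * rmulTinv n a b s (g i) z)"
  by (auto simp: rmulTinv_eq rmulT_sum sum_subtractf sum_distrib_left algebra_simps)

lemma rmulT_diff_scal:
  "rmulT n a b s (\<lambda>y. m y - c * m' y) = (\<lambda>y. rmulT n a b s m y - c * rmulT n a b s m' y)"
  by (auto simp: rmulT_eq fun_eq_iff algebra_simps)

lemma Wn_supported_expand:
  assumes "Wn_supported n m"
  shows "m = (\<lambda>z. \<Sum>x\<in>Wn n. m x * Tb x z)"
proof
  fix z
  show "m z = (\<Sum>x\<in>Wn n. m x * Tb x z)"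
    using assms by (cases "z \<in> Wn n") (auto simp: Tb_def Wn_supported_def finite_Wn if_distrib cong: if_cong)
qed

lemma Wn_supported_Tb: "x \<in> Wn n \<Longrightarrow> Wn_supported n (Tb x)"
  by (auto simp: Wn_supported_def Tb_def)

lemma barH_sum: "barH n a b (\<lambda>z. \<Sum>i\<in>S. f i * g i z) = (\<lambda>z. \<Sum>i\<in>S. barA (f i) * barH n a b (g i) z)"
proof
  fix y
  have "barH n a b (\<lambda>z. \<Sum>i\<in>S. f i * g i z) y
      = (\<Sum>w\<in>Wn n. \<Sum>i\<in>S. barA (f i) * (barA (g i w) * Tinvbar n a b w y))"
    unfolding barH_def by (simp add: barA_sum barA_mult sum_distrib_right mult.assoc)
  also have "\<dots> = (\<Sum>i\<in>S. barA (f i) * barH n a b (g i) y)"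
    unfolding barH_def by (subst sum.swap) (simp add: sum_distrib_left)
  finally show "barH n a b (\<lambda>z. \<Sum>i\<in>S. f i * g i z) y = (\<Sum>i\<in>S. barA (f i) * barH n a b (g i) y)" .
qed

lemma barH_add: "barH n a b (\<lambda>z. m z + m' z) = (\<lambda>z. barH n a b m z + barH n a b m' z)"
  by (auto simp: barH_def fun_eq_iff barA_add sum.distrib algebra_simps)

lemma barH_diff: "barH n a b (\<lambda>z. m z - m' z) = (\<lambda>z. barH n a b m z - barH n a b m' z)"
  by (auto simp: barH_def fun_eq_iff barA_diff sum_subtractf algebra_simps)

lemma barH_scal: "barH n a b (\<lambda>z. c * m z) = (\<lambda>z. barA c * barH n a b m z)"
  by (auto simp: barH_def fun_eq_iff barA_mult sum_distrib_left algebra_simps)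

lemma barH_Tb:
  assumes "x \<in> Wn n"
  shows "barH n a b (Tb x) = Tinvbar n a b x"
proof
  fix y
  have "barH n a b (Tb x) y = (\<Sum>w\<in>Wn n. if w = x then Tinvbar n a b w y else 0)"
    unfolding barH_def Tb_def by (intro sum.cong) auto
  then show "barH n a b (Tb x) y = Tinvbar n a b x y"
    using assms finite_Wn by simp
qed

context hecke_Bn
begin

lemma Wn_supported_rmulT: "s \<in> Sgens n \<Longrightarrow> Wn_supported n m \<Longrightarrow> Wn_supported n (rmulT n a b s m)"
  using Wn_comp_Sgens_iff[OF n] by (auto simp: Wn_supported_def rmulT_eq)

lemma Wn_supported_rmulTinv: "s \<in> Sgens n \<Longrightarrow> Wn_supported n m \<Longrightarrow> Wn_supported n (rmulTinv n a b s m)"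
  using Wn_supported_rmulT by (auto simp: Wn_supported_def rmulTinv_eq)

lemma Wn_supported_lmulT: "s \<in> Sgens n \<Longrightarrow> Wn_supported n m \<Longrightarrow> Wn_supported n (lmulT n a b s m)"
  using Sgens_comp_Wn_iff[OF n] by (auto simp: Wn_supported_def lmulT_def)

lemma Wn_supported_rmulC: "s \<in> Sgens n \<Longrightarrow> Wn_supported n m \<Longrightarrow> Wn_supported n (rmulC n a b s m)"
  using Wn_supported_rmulT by (auto simp: Wn_supported_def rmulC_def)

lemma rmulT_support_triangular:
  assumes s: "s \<in> Sgens n" and y: "y \<in> Wn n"
    and tri: "\<And>u. m u \<noteq> 0 \<Longrightarrow> u = w \<or> clen n u < clen n w"
    and "m (y \<circ> s) \<noteq> 0 \<or> m y \<noteq> 0"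
  shows "y = w \<circ> s \<or> clen n y \<le> clen n w"
  using assms(4)
proof
  assume "m (y \<circ> s) \<noteq> 0"
  then have "y \<circ> s = w \<or> clen n (y \<circ> s) < clen n w"
    using tri by blast
  then show ?thesis
    using clen_comp_Sgens[OF n y s] Sgens_comp_eq_iff[OF s, of y w] by auto
next
  assume "m y \<noteq> 0"
  then show ?thesis
    using tri by fastforce
qed

lemma rmulT_quadratic:
  assumes s: "s \<in> Sgens n" and m: "Wn_supported n m"
  shows "rmulT n a b s (rmulT n a b s m) = (\<lambda>y. m y + vdiff a b s * rmulT n a b s m y)"
proof
  fix y
  show "rmulT n a b s (rmulT n a b s m) y = m y + vdiff a b s * rmulT n a b s m y"
  proof (cases "y \<in> Wn n")
    case True
    then show ?thesis
      using clen_comp_Sgens_less_iff[OF n True s] Sgens_comp_self[OF s, of y]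
      by (auto simp: rmulT_eq algebra_simps)
  next
    case False
    then show ?thesis
      using m Wn_comp_Sgens_iff[OF n s] Sgens_comp_self[OF s, of y]
      by (simp add: Wn_supported_def rmulT_eq)
  qed
qed

lemma rmulT_rmulTinv: "s \<in> Sgens n \<Longrightarrow> Wn_supported n m \<Longrightarrow> rmulT n a b s (rmulTinv n a b s m) = m"
  using rmulT_quadratic[of s m] by (simp add: rmulTinv_eq rmulT_diff_scal)

lemma rmulTinv_rmulT: "s \<in> Sgens n \<Longrightarrow> Wn_supported n m \<Longrightarrow> rmulTinv n a b s (rmulT n a b s m) = m"
  using rmulT_quadratic[of s m] by (simp add: rmulTinv_eq fun_eq_iff)

lemma rmulTinv_rmulTinv:
  "s \<in> Sgens n \<Longrightarrow> Wn_supported n m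
    \<Longrightarrow> rmulTinv n a b s (rmulTinv n a b s m) = (\<lambda>y. m y - vdiff a b s * rmulTinv n a b s m y)"
  using rmulT_rmulTinv[of s m] by (simp add: rmulTinv_eq fun_eq_iff)

lemma rmulT_Tb_ascent:
  assumes s: "s \<in> Sgens n" and "clen n x < clen n (x \<circ> s)"
  shows "rmulT n a b s (Tb x) = Tb (x \<circ> s)"
proof
  fix y
  show "rmulT n a b s (Tb x) y = Tb (x \<circ> s) y"
    using assms Sgens_comp_eq_iff[OF s, of y x] by (auto simp: rmulT_eq Tb_def)
qed

lemma rmulT_Tb_descent:
  assumes s: "s \<in> Sgens n" and "clen n (x \<circ> s) < clen n x"
  shows "rmulT n a b s (Tb x) = (\<lambda>y. Tb (x \<circ> s) y + vdiff a b s * Tb x y)"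
proof
  fix y
  have "x \<circ> s \<noteq> x"
    using assms(2) by auto
  then show "rmulT n a b s (Tb x) y = Tb (x \<circ> s) y + vdiff a b s * Tb x y"
    using assms Sgens_comp_eq_iff[OF s, of y x] by (auto simp: rmulT_eq Tb_def)
qed

lemma lmulT_Tb_ascent:
  assumes s: "s \<in> Sgens n" and "clen n x < clen n (s \<circ> x)"
  shows "lmulT n a b s (Tb x) = Tb (s \<circ> x)"
proof
  fix y
  show "lmulT n a b s (Tb x) y = Tb (s \<circ> x) y"
    using assms Sgens_comp_left_eq_iff[OF s, of y x] by (auto simp: lmulT_def Tb_def)
qed

text \<open>When \<open>s y \<noteq> y t\<close> the descent conditions on both sides agree; when \<open>s y = y t\<close>, the generators
  \<open>s\<close> and \<open>t\<close> carry the same parameter.\<close>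
lemma lmulT_rmulT_commute:
  assumes s: "s \<in> Sgens n" and t: "t \<in> Sgens n" and m: "Wn_supported n m"
  shows "lmulT n a b s (rmulT n a b t m) = rmulT n a b t (lmulT n a b s m)"
proof
  fix y
  have assoc: "s \<circ> (y \<circ> t) = s \<circ> y \<circ> t"
    by (simp add: comp_assoc)
  show "lmulT n a b s (rmulT n a b t m) y = rmulT n a b t (lmulT n a b s m) y"
  proof (cases "y \<in> Wn n")
    case False
    then have "s \<circ> y \<notin> Wn n" "y \<circ> t \<notin> Wn n" "s \<circ> y \<circ> t \<notin> Wn n"
      using Sgens_comp_Wn_iff[OF n s] Wn_comp_Sgens_iff[OF n t] by blast+
    then show ?thesis
      using m False by (simp add: Wn_supported_def lmulT_def rmulT_eq assoc)
  next
    case y: True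
    show ?thesis
    proof (cases "s \<circ> y = y \<circ> t")
      case False
      then show ?thesis
        using clen_right_descent_comp_left[OF n y s t False] clen_left_descent_comp_right[OF n y s t False]
        unfolding lmulT_def rmulT_eq assoc by (auto simp: algebra_simps)
    next
      case True
      then have "vdiff a b s = vdiff a b t"
        using Sgens_conj_tgen_iff[OF y s t] by (auto simp: vdiff_def vpar_def vinv_def)
      moreover have "s \<circ> y \<circ> t = y"
        using True Sgens_comp_self[OF t, of y] by simp
      ultimately show ?thesis
        unfolding lmulT_def rmulT_eq assoc True by (auto simp: algebra_simps)
    qed
  qed
qed

lemma Wn_supported_foldr_rmulT:
  "set ws \<subseteq> Sgens n \<Longrightarrow> Wn_supported n m \<Longrightarrow> Wn_supported n (foldr (rmulT n a b) ws m)"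
  by (induction ws) (auto intro: Wn_supported_rmulT)

lemma Wn_supported_foldr_lmulT:
  "set ws \<subseteq> Sgens n \<Longrightarrow> Wn_supported n m \<Longrightarrow> Wn_supported n (foldr (lmulT n a b) ws m)"
  by (induction ws) (auto intro: Wn_supported_lmulT)

lemma Wn_supported_fold_rmulTinv:
  "set ws \<subseteq> Sgens n \<Longrightarrow> Wn_supported n m \<Longrightarrow> Wn_supported n (fold (rmulTinv n a b) ws m)"
  by (induction ws arbitrary: m) (auto intro: Wn_supported_rmulTinv)

lemma foldr_rmulT_fold_rmulTinv:
  "set ws \<subseteq> Sgens n \<Longrightarrow> Wn_supported n m \<Longrightarrow> foldr (rmulT n a b) ws (fold (rmulTinv n a b) ws m) = m"
  by (induction ws arbitrary: m) (auto simp: rmulT_rmulTinv Wn_supported_rmulTinv)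

lemma fold_rmulTinv_foldr_rmulT:
  "set ws \<subseteq> Sgens n \<Longrightarrow> Wn_supported n m \<Longrightarrow> fold (rmulTinv n a b) ws (foldr (rmulT n a b) ws m) = m"
  by (induction ws arbitrary: m) (auto simp: rmulTinv_rmulT Wn_supported_foldr_rmulT)

lemma foldr_rmulT_sum:
  "foldr (rmulT n a b) ws (\<lambda>z. \<Sum>i\<in>S. f i * g i z) = (\<lambda>z. \<Sum>i\<in>S. f i * foldr (rmulT n a b) ws (g i) z)"
  by (induction ws) (simp_all add: rmulT_sum)

lemma foldr_lmulT_foldr_rmulT:
  assumes "set rs \<subseteq> Sgens n" and "set ws \<subseteq> Sgens n" and "Wn_supported n m"
  shows "foldr (lmulT n a b) rs (foldr (rmulT n a b) ws m) = foldr (rmulT n a b) ws (foldr (lmulT n a b) rs m)"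
proof -
  have lmulT_foldr_rmulT: "lmulT n a b s (foldr (rmulT n a b) ws m) = foldr (rmulT n a b) ws (lmulT n a b s m)"
    if "s \<in> Sgens n" "Wn_supported n m" for s m
    using assms(2) that
    by (induction ws) (simp_all add: lmulT_rmulT_commute Wn_supported_foldr_rmulT)
  show ?thesis
    using assms(1,3)
    by (induction rs) (simp_all add: lmulT_foldr_rmulT Wn_supported_foldr_lmulT)
qed

lemma foldr_lmulT_Tb_id:
  "reduced_word n rs \<Longrightarrow> foldr (lmulT n a b) rs (Tb id) = Tb (word_prod rs)"
proof (induction rs)
  case (Cons s rs)
  then have "reduced_word n rs"
    using reduced_word_ConsD[OF n] by blast
  moreover have "clen n (word_prod rs) < clen n (s \<circ> word_prod rs)"
    using Cons.prems calculation by (simp add: reduced_word_def)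
  ultimately show ?case
    using Cons lmulT_Tb_ascent[of s "word_prod rs"] by (simp add: reduced_word_def comp_def)
qed simp

lemma foldr_rmulT_Tb_id:
  "reduced_word n ws \<Longrightarrow> foldr (rmulT n a b) ws (Tb id) = Tb (word_prod (rev ws))"
proof (induction ws)
  case (Cons s ws)
  then have red: "reduced_word n ws" "reduced_word n (rev (s # ws))" "reduced_word n (rev ws)"
    using reduced_word_ConsD[OF n] reduced_word_rev[OF n] by blast+
  then have "clen n (word_prod (rev ws)) < clen n (word_prod (rev ws) \<circ> s)"
    by (simp add: reduced_word_def word_prod_snoc)
  then show ?case
    using Cons red rmulT_Tb_ascent[of s "word_prod (rev ws)"] by (simp add: reduced_word_def word_prod_snoc comp_def)
qed simp

text \<open>Right multiplication along a reduced word of \<open>w\<close> commutes with the left multiplications that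
  produce \<open>T\<^sub>x\<close> from \<open>T\<^sub>1\<close>, and it sends \<open>T\<^sub>1\<close> to \<open>T\<^bsub>w\<^sup>-\<^sup>1\<^esub>\<close>; so it depends only on \<open>w\<close>.\<close>
lemma foldr_rmulT_reduced_word_cong:
  assumes ws: "reduced_word n ws" and vs: "reduced_word n vs" and eq: "word_prod ws = word_prod vs"
    and m: "Wn_supported n m"
  shows "foldr (rmulT n a b) ws m = foldr (rmulT n a b) vs m"
proof -
  have "foldr (rmulT n a b) ws (Tb x) = foldr (rmulT n a b) vs (Tb x)" if x: "x \<in> Wn n" for x
  proof -
    obtain rs where rs: "reduced_word n rs" "word_prod rs = x"
      using red_word[OF n x] by blast
    then have Tb_x: "Tb x = foldr (lmulT n a b) rs (Tb id)"
      by (simp add: foldr_lmulT_Tb_id)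
    have sets: "set rs \<subseteq> Sgens n" "set ws \<subseteq> Sgens n" "set vs \<subseteq> Sgens n"
      using rs ws vs by (simp_all add: reduced_word_def)
    have "word_prod (rev ws) = word_prod (rev vs)"
      using eq inv_word_prod[of ws n] inv_word_prod[of vs n] sets by metis
    then show ?thesis
      unfolding Tb_x using ws vs sets
      by (simp add: foldr_lmulT_foldr_rmulT[symmetric] Wn_supported_Tb foldr_rmulT_Tb_id)
  qed
  then show ?thesis
    by (subst (1 2) Wn_supported_expand[OF m]) (simp add: foldr_rmulT_sum)
qed

lemma fold_rmulTinv_reduced_word_cong:
  assumes ws: "reduced_word n ws" and vs: "reduced_word n vs" and eq: "word_prod ws = word_prod vs"
  shows "fold (rmulTinv n a b) ws (Tb id) = fold (rmulTinv n a b) vs (Tb id)"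
proof -
  let ?m = "fold (rmulTinv n a b) vs (Tb id)"
  have sets: "set ws \<subseteq> Sgens n" "set vs \<subseteq> Sgens n"
    using ws vs by (simp_all add: reduced_word_def)
  have m: "Wn_supported n ?m"
    using Wn_supported_fold_rmulTinv[OF sets(2) Wn_supported_Tb[OF id_Wn]] .
  have "foldr (rmulT n a b) ws ?m = Tb id"
    using foldr_rmulT_reduced_word_cong[OF ws vs eq m]
      foldr_rmulT_fold_rmulTinv[OF sets(2) Wn_supported_Tb[OF id_Wn]] by simp
  then show ?thesis
    using fold_rmulTinv_foldr_rmulT[OF sets(1) m] by simp
qed

lemma Tinvbar_comp_ascent:
  assumes x: "x \<in> Wn n" and s: "s \<in> Sgens n" and up: "clen n (x \<circ> s) = clen n x + 1"
  shows "Tinvbar n a b (x \<circ> s) = rmulTinv n a b s (Tinvbar n a b x)"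
proof -
  have "reduced_word n (red_word n x @ [s])"
    using red_word[OF n x] s up by (simp add: reduced_word_def word_prod_snoc)
  then have "fold (rmulTinv n a b) (red_word n (x \<circ> s)) (Tb id) = fold (rmulTinv n a b) (red_word n x @ [s]) (Tb id)"
    using red_word[OF n x] red_word[OF n Wn_comp_Sgens_iff[OF n s, THEN iffD2, OF x]]
    by (intro fold_rmulTinv_reduced_word_cong) (simp_all add: word_prod_snoc)
  then show ?thesis
    by (simp add: Tinvbar_def)
qed

lemma Wn_supported_Tinvbar: "x \<in> Wn n \<Longrightarrow> Wn_supported n (Tinvbar n a b x)"
  unfolding Tinvbar_def using red_word(1)[OF n]
  by (intro Wn_supported_fold_rmulTinv) (simp_all add: reduced_word_def Wn_supported_Tb)

lemma fold_rmulTinv_triangular: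
  assumes "reduced_word n ws"
  shows "fold (rmulTinv n a b) ws (Tb id) (word_prod ws) = 1"
    and "fold (rmulTinv n a b) ws (Tb id) y \<noteq> 0 \<Longrightarrow> y = word_prod ws \<or> clen n y < length ws"
proof -
  have "fold (rmulTinv n a b) ws (Tb id) (word_prod ws) = 1 \<and>
      (\<forall>y. fold (rmulTinv n a b) ws (Tb id) y \<noteq> 0 \<longrightarrow> y = word_prod ws \<or> clen n y < length ws)"
    using assms
  proof (induction ws rule: rev_induct)
    case (snoc s ws)
    define z where "z = word_prod ws"
    define F where "F = fold (rmulTinv n a b) ws (Tb id)"
    have ws: "reduced_word n ws"
      using snoc.prems by (rule reduced_word_snocD[OF n])
    have s: "s \<in> Sgens n"
      using snoc.prems by (simp add: reduced_word_def)
    have cz: "clen n z = length ws" "clen n (z \<circ> s) = Suc (length ws)"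
      using ws snoc.prems by (simp_all add: z_def reduced_word_def word_prod_snoc)
    have IH: "F z = 1" "\<And>y. F y \<noteq> 0 \<Longrightarrow> y = z \<or> clen n y < clen n z"
      using snoc.IH[OF ws] cz(1) by (simp_all add: F_def z_def id_def)
    have F: "Wn_supported n F"
      unfolding F_def using ws
      by (intro Wn_supported_fold_rmulTinv) (simp_all add: reduced_word_def Wn_supported_Tb)
    have "z \<circ> s \<noteq> z"
      using cz by auto
    then have "F (z \<circ> s) = 0"
      using IH(2)[of "z \<circ> s"] cz by auto
    then have top: "rmulTinv n a b s F (z \<circ> s) = 1"
      using IH(1) cz Sgens_comp_self[OF s, of z] by (simp add: rmulTinv_eq rmulT_eq)
    have lower: "y = z \<circ> s \<or> clen n y < Suc (length ws)" if "rmulTinv n a b s F y \<noteq> 0" for y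
    proof -
      have "y \<in> Wn n"
        using Wn_supported_rmulTinv[OF s F] that by (auto simp: Wn_supported_def)
      then have "y = z \<circ> s \<or> clen n y \<le> clen n z"
        using rmulT_support_triangular[OF s _ IH(2) rmulTinv_nonzero[OF that]] by blast
      then show ?thesis
        using cz(1) by linarith
    qed
    show ?case
      using top lower by (simp add: F_def z_def word_prod_snoc comp_def id_def)
  qed (simp add: Tb_def)
  then show "fold (rmulTinv n a b) ws (Tb id) (word_prod ws) = 1"
    and "fold (rmulTinv n a b) ws (Tb id) y \<noteq> 0 \<Longrightarrow> y = word_prod ws \<or> clen n y < length ws"
    by blast+
qed

lemma Tinvbar_triangular:
  assumes x: "x \<in> Wn n"
  shows "Tinvbar n a b x x = 1" and "Tinvbar n a b x y \<noteq> 0 \<Longrightarrow> y = x \<or> clen n y < clen n x"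
proof -
  have "length (red_word n x) = clen n x"
    using red_word[OF n x] by (simp add: reduced_word_def)
  then show "Tinvbar n a b x x = 1" and "Tinvbar n a b x y \<noteq> 0 \<Longrightarrow> y = x \<or> clen n y < clen n x"
    using fold_rmulTinv_triangular[OF red_word(1)[OF n x]] unfolding Tinvbar_def red_word(2)[OF n x]
    by simp_all
qed

lemma barH_rmulT_Tb:
  assumes x: "x \<in> Wn n" and s: "s \<in> Sgens n"
  shows "barH n a b (rmulT n a b s (Tb x)) = rmulTinv n a b s (Tinvbar n a b x)"
proof (cases "clen n x < clen n (x \<circ> s)")
  case True
  have xs: "x \<circ> s \<in> Wn n"
    using Wn_comp_Sgens_iff[OF n s] x by simp
  have "barH n a b (rmulT n a b s (Tb x)) = barH n a b (Tb (x \<circ> s))"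
    using rmulT_Tb_ascent[OF s True] by simp
  also have "\<dots> = Tinvbar n a b (x \<circ> s)"
    using barH_Tb[OF xs] .
  also have "\<dots> = rmulTinv n a b s (Tinvbar n a b x)"
    using True clen_comp_Sgens[OF n x s] by (intro Tinvbar_comp_ascent[OF x s]) auto
  finally show ?thesis .
next
  case False
  define z where "z = x \<circ> s"
  have z: "z \<in> Wn n" and zs: "z \<circ> s = x"
    using Wn_comp_Sgens_iff[OF n s] x Sgens_comp_self[OF s] by (simp_all add: z_def)
  have down: "clen n (x \<circ> s) < clen n x" and "clen n (z \<circ> s) = clen n z + 1"
    using False clen_comp_Sgens[OF n x s] zs by (auto simp: z_def)
  then have Tx: "Tinvbar n a b x = rmulTinv n a b s (Tinvbar n a b z)"
    using Tinvbar_comp_ascent[OF z s] zs by simp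
  have "barH n a b (rmulT n a b s (Tb x)) = (\<lambda>y. barH n a b (Tb z) y + barA (vdiff a b s) * barH n a b (Tb x) y)"
    using rmulT_Tb_descent[OF s down] by (simp add: z_def barH_add barH_scal)
  also have "\<dots> = (\<lambda>y. Tinvbar n a b z y - vdiff a b s * Tinvbar n a b x y)"
    unfolding barH_Tb[OF z] barH_Tb[OF x] barA_vdiff by simp
  also have "\<dots> = rmulTinv n a b s (Tinvbar n a b x)"
    using rmulTinv_rmulTinv[OF s Wn_supported_Tinvbar[OF z]] Tx by simp
  finally show ?thesis .
qed

lemma barH_rmulT:
  assumes s: "s \<in> Sgens n" and m: "Wn_supported n m"
  shows "barH n a b (rmulT n a b s m) = rmulTinv n a b s (barH n a b m)"
proof -
  have "rmulT n a b s m = (\<lambda>z. \<Sum>x\<in>Wn n. m x * rmulT n a b s (Tb x) z)"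
    by (subst Wn_supported_expand[OF m]) (simp add: rmulT_sum)
  then have "barH n a b (rmulT n a b s m) = (\<lambda>z. \<Sum>x\<in>Wn n. barA (m x) * barH n a b (rmulT n a b s (Tb x)) z)"
    by (simp add: barH_sum)
  also have "\<dots> = (\<lambda>z. \<Sum>x\<in>Wn n. barA (m x) * rmulTinv n a b s (Tinvbar n a b x) z)"
    using barH_rmulT_Tb[OF _ s] by simp
  also have "\<dots> = rmulTinv n a b s (barH n a b m)"
    by (simp add: rmulTinv_sum barH_def)
  finally show ?thesis .
qed

lemma barH_rmulC:
  assumes s: "s \<in> Sgens n" and m: "Wn_supported n m"
  shows "barH n a b (rmulC n a b s m) = rmulC n a b s (barH n a b m)"
  unfolding rmulC_def barH_add barH_scal barH_rmulT[OF s m]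
  by (auto simp: rmulTinv_eq barA_vinv vdiff_def algebra_simps)

end

section \<open>The Kazhdan-Lusztig basis\<close>

definition KL_spec :: "nat \<Rightarrow> 'g::linordered_ab_group_add \<Rightarrow> 'g \<Rightarrow> (int \<Rightarrow> int) \<Rightarrow> 'g hmod \<Rightarrow> bool" where
  "KL_spec n a b x C \<longleftrightarrow> (\<forall>y. y \<notin> Wn n \<longrightarrow> C y = 0) \<and> barH n a b C = C
     \<and> C x - 1 \<in> Aneg \<and> (\<forall>y. y \<noteq> x \<longrightarrow> C y \<in> Aneg)"

definition KL_candidate :: "nat \<Rightarrow> 'g::linordered_ab_group_add \<Rightarrow> 'g \<Rightarrow> (int \<Rightarrow> int) \<Rightarrow> 'g hmod \<Rightarrow> bool" where
  "KL_candidate n a b x m \<longleftrightarrow> Wn_supported n m \<and> barH n a b m = m \<and> m x = 1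
     \<and> (\<forall>y. m y \<noteq> 0 \<longrightarrow> y = x \<or> clen n y < clen n x)"

definition KL_triangular :: "nat \<Rightarrow> 'g::linordered_ab_group_add \<Rightarrow> 'g \<Rightarrow> (int \<Rightarrow> int) \<Rightarrow> 'g hmod \<Rightarrow> bool" where
  "KL_triangular n a b x C \<longleftrightarrow> KL_candidate n a b x C \<and> (\<forall>y. y \<noteq> x \<longrightarrow> C y \<in> Aneg)"

context hecke_Bn
begin

lemma barH_invariant_Aneg_eq_0:
  assumes D: "Wn_supported n D" and bar: "barH n a b D = D" and neg: "\<And>y. D y \<in> Aneg"
  shows "D = (\<lambda>y. 0)"
proof (rule ccontr)
  let ?S = "{y \<in> Wn n. D y \<noteq> 0}"
  assume "D \<noteq> (\<lambda>y. 0)"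
  then have "?S \<noteq> {}"
    using D by (auto simp: Wn_supported_def)
  then obtain z where z: "z \<in> ?S" and max: "\<And>u. u \<in> ?S \<Longrightarrow> clen n u \<le> clen n z"
    using finite_obtain_max[of ?S "clen n"] finite_Wn by auto
  have "barA (D w) * Tinvbar n a b w z = 0" if w: "w \<in> Wn n - {z}" for w
  proof (cases "Tinvbar n a b w z = 0")
    case False
    then have "clen n z < clen n w"
      using Tinvbar_triangular(2)[of w z] w by auto
    then have "D w = 0"
      using max[of w] w by force
    then show ?thesis by simp
  qed simp
  then have "(\<Sum>w\<in>Wn n - {z}. barA (D w) * Tinvbar n a b w z) = 0"
    by (intro sum.neutral) blast
  moreover have "z \<in> Wn n"
    using z by simp
  ultimately have "barH n a b D z = barA (D z) * Tinvbar n a b z z"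
    unfolding barH_def using sum.remove[OF finite_Wn, where x = z and g = "\<lambda>w. barA (D w) * Tinvbar n a b w z"] by simp
  then have "barA (D z) = D z"
    using bar Tinvbar_triangular(1)[of z] z by simp
  then show False
    using bar_invariant_Aneg_eq_0[OF neg] z by simp
qed

lemma KL_spec_unique:
  assumes "KL_spec n a b x C" and "KL_spec n a b x C'"
  shows "C = C'"
proof -
  let ?D = "\<lambda>y. C y - C' y"
  have "Wn_supported n ?D" and "barH n a b ?D = ?D"
    using assms by (auto simp: KL_spec_def Wn_supported_def barH_diff)
  moreover have "?D y \<in> Aneg" for y
  proof (cases "y = x")
    case True
    have "C x - 1 \<in> Aneg" and "C' x - 1 \<in> Aneg"
      using assms by (simp_all add: KL_spec_def)
    then have "(C x - 1) - (C' x - 1) \<in> Aneg"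
      by (rule Aneg_diff)
    then show ?thesis
      using True by simp
  next
    case False
    then show ?thesis
      using assms by (intro Aneg_diff) (simp_all add: KL_spec_def)
  qed
  ultimately have "?D = (\<lambda>y. 0)"
    by (rule barH_invariant_Aneg_eq_0)
  then show ?thesis
    by (simp add: fun_eq_iff)
qed

lemma KLC_eqI:
  assumes "KL_triangular n a b x C"
  shows "KLC n a b x = C"
proof -
  have "KL_spec n a b x C"
    using assms by (simp add: KL_triangular_def KL_candidate_def KL_spec_def Wn_supported_def)
  then show ?thesis
    unfolding KLC_def KL_spec_def[symmetric] using KL_spec_unique by blast
qed

lemma KLC_level_sum_eval:
  assumes KZ: "\<And>z. z \<in> Wn n \<Longrightarrow> clen n z = L \<Longrightarrow> KL_candidate n a b z (KLC n a b z)"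
    and "L \<le> clen n y"
  shows "(\<Sum>z\<in>{z \<in> Wn n. clen n z = L}. c z * KLC n a b z y) = (if y \<in> Wn n \<and> clen n y = L then c y else 0)"
proof -
  let ?Z = "{z \<in> Wn n. clen n z = L}"
  have "(\<Sum>z\<in>?Z. c z * KLC n a b z y) = (if y \<in> ?Z then c y else 0)"
  proof (rule sum_unitriangular_eval[where f = "clen n"])
    show "finite ?Z"
      using finite_Wn by simp
    fix z
    assume z: "z \<in> ?Z"
    then have "KL_candidate n a b z (KLC n a b z)"
      using KZ by simp
    then show "KLC n a b z z = 1" and "\<And>u. KLC n a b z u \<noteq> 0 \<Longrightarrow> u = z \<or> clen n u < L"
      using z by (auto simp: KL_candidate_def)
  qed (use assms(2) in simp_all)
  then show ?thesis
    by simp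
qed

lemma KL_candidate_subtract_level:
  assumes IH: "\<And>z. z \<in> Wn n \<Longrightarrow> clen n z < clen n x \<Longrightarrow> KL_triangular n a b z (KLC n a b z)"
    and m: "KL_candidate n a b x m" and L: "L < clen n x" and bar: "\<And>z. barA (c z) = c z"
  shows "KL_candidate n a b x (\<lambda>y. m y - (\<Sum>z\<in>{z \<in> Wn n. clen n z = L}. c z * KLC n a b z y))"
proof -
  let ?Z = "{z \<in> Wn n. clen n z = L}"
  let ?m' = "\<lambda>y. m y - (\<Sum>z\<in>?Z. c z * KLC n a b z y)"
  have KZ: "KL_candidate n a b z (KLC n a b z)" if "z \<in> Wn n" "clen n z = L" for z
    using IH that L by (simp add: KL_triangular_def)
  have "Wn_supported n ?m'"
    using m KZ by (auto simp: KL_candidate_def Wn_supported_def intro!: sum.neutral)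
  moreover have "barH n a b ?m' = ?m'"
    using m KZ bar by (simp add: barH_diff barH_sum KL_candidate_def)
  moreover have "?m' x = 1"
    using m KLC_level_sum_eval[OF KZ, where y = x] L by (simp add: KL_candidate_def)
  moreover have "y = x \<or> clen n y < clen n x" if "?m' y \<noteq> 0" for y
  proof (cases "m y = 0")
    case True
    then have "(\<Sum>z\<in>?Z. c z * KLC n a b z y) \<noteq> 0"
      using that by simp
    then have "clen n y \<le> L"
      using KLC_level_sum_eval[OF KZ, where y = y] by (cases "L \<le> clen n y") (auto split: if_splits)
    then show ?thesis
      using L by simp
  next
    case False
    then show ?thesis
      using m by (simp add: KL_candidate_def)
  qed
  ultimately show ?thesis
    by (simp add: KL_candidate_def)
qed

text \<open>Subtracting bar-invariant multiples of the shorter \<open>C\<^sub>z\<close> with \<open>\<ell>(z) = L\<close> makes the coefficients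
  at length \<open>L\<close> lie in \<open>A\<^sub><\<^sub>0\<close>.\<close>
lemma KL_candidate_correct_level:
  assumes IH: "\<And>z. z \<in> Wn n \<Longrightarrow> clen n z < clen n x \<Longrightarrow> KL_triangular n a b z (KLC n a b z)"
    and m: "KL_candidate n a b x m" and neg: "\<And>y. y \<noteq> x \<Longrightarrow> L < clen n y \<Longrightarrow> m y \<in> Aneg"
    and L: "L < clen n x"
  obtains m' where "KL_candidate n a b x m'" and "\<And>y. y \<noteq> x \<Longrightarrow> L \<le> clen n y \<Longrightarrow> m' y \<in> Aneg"
proof -
  define c where "c z = (SOME c. barA c = c \<and> m z - c \<in> Aneg)" for z
  have c: "barA (c z) = c z" "m z - c z \<in> Aneg" for z
    using someI_ex[OF exists_bar_invariant_approx[of "m z"]] by (simp_all add: c_def)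
  let ?m' = "\<lambda>y. m y - (\<Sum>z\<in>{z \<in> Wn n. clen n z = L}. c z * KLC n a b z y)"
  have KZ: "KL_candidate n a b z (KLC n a b z)" if "z \<in> Wn n" "clen n z = L" for z
    using IH that L by (simp add: KL_triangular_def)
  have neg': "?m' y \<in> Aneg" if "y \<noteq> x" "L \<le> clen n y" for y
  proof -
    have "?m' y = (if y \<in> Wn n \<and> clen n y = L then m y - c y else m y)"
      using KLC_level_sum_eval[OF KZ that(2), of c] by simp
    moreover have "m y \<in> Aneg" if "y \<notin> Wn n"
      using m that by (simp add: KL_candidate_def Wn_supported_def)
    ultimately show ?thesis
      using c(2) neg[OF \<open>y \<noteq> x\<close>] that(2) by (cases "clen n y = L") auto
  qed
  show ?thesis
    using that[OF KL_candidate_subtract_level[OF IH m L c(1)] neg'] .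
qed

lemma KL_candidate_correct:
  assumes IH: "\<And>z. z \<in> Wn n \<Longrightarrow> clen n z < clen n x \<Longrightarrow> KL_triangular n a b z (KLC n a b z)"
    and m: "KL_candidate n a b x m"
  obtains C where "KL_triangular n a b x C"
proof -
  have "\<exists>m'. KL_candidate n a b x m' \<and> (\<forall>y. y \<noteq> x \<longrightarrow> clen n x - j \<le> clen n y \<longrightarrow> m' y \<in> Aneg)"
    if "j \<le> clen n x" for j
    using that
  proof (induction j)
    case 0
    have "m y = 0" if "y \<noteq> x" "clen n x \<le> clen n y" for y
      using m that by (force simp: KL_candidate_def)
    then show ?case
      using m by auto
  next
    case (Suc j)
    define L where "L = clen n x - Suc j"
    have L: "L < clen n x" "clen n x - j = Suc L"
      using Suc.prems by (simp_all add: L_def)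
    obtain m' where "KL_candidate n a b x m'" and "\<And>y. y \<noteq> x \<Longrightarrow> L < clen n y \<Longrightarrow> m' y \<in> Aneg"
      using Suc L by (auto simp: Suc_le_eq)
    then obtain m'' where "KL_candidate n a b x m''" and "\<And>y. y \<noteq> x \<Longrightarrow> L \<le> clen n y \<Longrightarrow> m'' y \<in> Aneg"
      using KL_candidate_correct_level[OF IH _ _ L(1)] by blast
    then show ?case
      by (auto simp: L_def)
  qed
  from this[of "clen n x"] show ?thesis
    using that by (auto simp: KL_triangular_def)
qed

lemma Tinvbar_id: "Tinvbar n a b id = Tb id"
  using red_word[OF n id_Wn] by (simp add: Tinvbar_def reduced_word_def)

text \<open>For \<open>x = w s > w\<close> the product \<open>C\<^sub>w C\<^sub>s\<close> is a candidate for \<open>C\<^sub>x\<close>.\<close>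
lemma exists_KL_candidate:
  assumes x: "x \<in> Wn n"
    and IH: "\<And>z. z \<in> Wn n \<Longrightarrow> clen n z < clen n x \<Longrightarrow> KL_triangular n a b z (KLC n a b z)"
  obtains m where "KL_candidate n a b x m"
proof (cases "x = id")
  case True
  then have "KL_candidate n a b x (Tb id)"
    using barH_Tb[OF id_Wn, of n a b] Wn_supported_Tb[OF id_Wn] by (simp add: KL_candidate_def Tinvbar_id Tb_def)
  then show ?thesis ..
next
  case False
  then obtain s where s: "s \<in> Sgens n" and "inversion_length n (x \<circ> s) = inversion_length n x - 2"
    using exists_descent[OF n x] by blast
  moreover define w where "w = x \<circ> s"
  ultimately have w: "w \<in> Wn n" and "clen n x = clen n w + 1" and ws: "w \<circ> s = x"
    using x Wn_comp_Sgens_iff[OF n s] inversion_length_eq_clen[OF n] Sgens_comp_self[OF s] by auto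
  then have Cw: "KL_candidate n a b w (KLC n a b w)" and cw: "clen n w < clen n x"
    using IH[OF w] by (simp_all add: KL_triangular_def)
  then have "KLC n a b w x = 0" and "KLC n a b w w = 1"
    by (auto simp: KL_candidate_def)
  then have "rmulC n a b s (KLC n a b w) x = 1"
    by (simp add: rmulC_def rmulT_eq flip: w_def)
  moreover have "y = x \<or> clen n y < clen n x" if "rmulC n a b s (KLC n a b w) y \<noteq> 0" for y
  proof -
    have "y \<in> Wn n"
      using that Cw Wn_supported_rmulC[OF s] by (auto simp: KL_candidate_def Wn_supported_def)
    then show ?thesis
      using rmulT_support_triangular[OF s _ _ rmulC_nonzero[OF that]] Cw cw ws
      by (force simp: KL_candidate_def)
  qed
  ultimately have "KL_candidate n a b x (rmulC n a b s (KLC n a b w))"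
    using Cw Wn_supported_rmulC[OF s] barH_rmulC[OF s] by (simp add: KL_candidate_def)
  then show ?thesis ..
qed

lemma KL_triangular_KLC: "x \<in> Wn n \<Longrightarrow> KL_triangular n a b x (KLC n a b x)"
proof (induction "clen n x" arbitrary: x rule: less_induct)
  case less
  obtain m where "KL_candidate n a b x m"
    using exists_KL_candidate[OF less.prems less.hyps] by blast
  then obtain C where "KL_triangular n a b x C"
    using KL_candidate_correct[OF less.hyps] by blast
  then show ?case
    using KLC_eqI by simp
qed

lemma Wn_supported_KLC: "x \<in> Wn n \<Longrightarrow> Wn_supported n (KLC n a b x)"
  using KL_triangular_KLC by (simp add: KL_triangular_def KL_candidate_def)

lemma barH_KLC: "x \<in> Wn n \<Longrightarrow> barH n a b (KLC n a b x) = KLC n a b x"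
  using KL_triangular_KLC by (simp add: KL_triangular_def KL_candidate_def)

lemma KLC_diag: "x \<in> Wn n \<Longrightarrow> KLC n a b x x = 1"
  using KL_triangular_KLC by (simp add: KL_triangular_def KL_candidate_def)

lemma KLC_nonzero: "x \<in> Wn n \<Longrightarrow> KLC n a b x y \<noteq> 0 \<Longrightarrow> y = x \<or> clen n y < clen n x"
  using KL_triangular_KLC by (simp add: KL_triangular_def KL_candidate_def)

lemma KLC_Aneg: "x \<in> Wn n \<Longrightarrow> y \<noteq> x \<Longrightarrow> KLC n a b x y \<in> Aneg"
  using KL_triangular_KLC by (simp add: KL_triangular_def)

lemma KLC_eq_0: "x \<in> Wn n \<Longrightarrow> y \<noteq> x \<Longrightarrow> clen n x \<le> clen n y \<Longrightarrow> KLC n a b x y = 0"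
  using KLC_nonzero[of x y] by fastforce

end

section \<open>Expansion in the Kazhdan-Lusztig basis\<close>

definition KL_expand :: "nat \<Rightarrow> 'g::linordered_ab_group_add \<Rightarrow> 'g \<Rightarrow> ((int \<Rightarrow> int) \<Rightarrow> 'g grpring) \<Rightarrow> 'g hmod" where
  "KL_expand n a b c = (\<lambda>y. \<Sum>w\<in>Wn n. c w * KLC n a b w y)"

context hecke_Bn
begin

lemma KL_expand_eval:
  assumes z: "z \<in> Wn n"
  shows "KL_expand n a b c z = c z + (\<Sum>v\<in>{v \<in> Wn n. clen n z < clen n v}. c v * KLC n a b v z)"
proof -
  have "KL_expand n a b c z = c z * KLC n a b z z + (\<Sum>v\<in>Wn n - {z}. c v * KLC n a b v z)"
    unfolding KL_expand_def using z finite_Wn[of n] by (simp add: sum.remove)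
  also have "(\<Sum>v\<in>Wn n - {z}. c v * KLC n a b v z) = (\<Sum>v\<in>{v \<in> Wn n. clen n z < clen n v}. c v * KLC n a b v z)"
    using KLC_nonzero[of _ z] finite_Wn[of n] by (intro sum.mono_neutral_right) force+
  finally show ?thesis
    using KLC_diag[OF z] by simp
qed

lemma KL_expand_eval_single:
  assumes z: "z \<in> Wn n" and u: "u \<in> Wn n" and "clen n z < clen n u"
    and others: "\<And>v. v \<in> Wn n \<Longrightarrow> v \<noteq> u \<Longrightarrow> clen n z < clen n v \<Longrightarrow> c v = 0"
  shows "KL_expand n a b c z = c z + c u * KLC n a b u z"
proof -
  have "(\<Sum>v\<in>{v \<in> Wn n. clen n z < clen n v}. c v * KLC n a b v z) = c u * KLC n a b u z"
    using assms finite_Wn[of n] by (subst sum.remove[of _ u]) (auto intro!: sum.neutral)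
  then show ?thesis
    using KL_expand_eval[OF z] by simp
qed

lemma KL_expand_coeff_eq_0_above:
  assumes c: "Wn_supported n c" and vanish: "\<And>y. y \<in> Wn n \<Longrightarrow> L < clen n y \<Longrightarrow> KL_expand n a b c y = 0"
    and "L < clen n w"
  shows "c w = 0"
proof (rule ccontr)
  let ?S = "{y \<in> Wn n. c y \<noteq> 0}"
  assume "c w \<noteq> 0"
  then have "w \<in> ?S"
    using c by (auto simp: Wn_supported_def)
  moreover have "finite ?S"
    using finite_Wn by simp
  ultimately obtain z where z: "z \<in> ?S" and max: "\<And>u. u \<in> ?S \<Longrightarrow> clen n u \<le> clen n z"
    using finite_obtain_max[of ?S "clen n"] by blast
  have "(\<Sum>v\<in>{v \<in> Wn n. clen n z < clen n v}. c v * KLC n a b v z) = 0"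
    using max by (intro sum.neutral) force
  then have "KL_expand n a b c z = c z"
    using KL_expand_eval[of z c] z by simp
  moreover have "L < clen n z"
    using max[OF \<open>w \<in> ?S\<close>] \<open>L < clen n w\<close> by simp
  ultimately show False
    using vanish z by simp
qed

lemma KL_expand_inj:
  assumes "Wn_supported n c" and "Wn_supported n c'" and eq: "KL_expand n a b c = KL_expand n a b c'"
  shows "c = c'"
proof -
  let ?e = "\<lambda>w. c w - c' w"
  have e: "Wn_supported n ?e"
    using assms by (auto simp: Wn_supported_def)
  have zero: "KL_expand n a b ?e = (\<lambda>y. 0)"
    using eq by (auto simp: KL_expand_def fun_eq_iff algebra_simps sum_subtractf dest: fun_cong)
  then have above: "?e w = 0" if "0 < clen n w" for w
    using KL_expand_coeff_eq_0_above[OF e, of 0] that by simp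
  moreover have "?e id = 0"
    using KL_expand_eval[OF id_Wn, of ?e] zero above by (simp add: sum.neutral)
  ultimately have "?e w = 0" for w
    using e clen_eq_0_iff[OF n] by (metis Wn_supported_def gr0I)
  then show ?thesis
    by (simp add: fun_eq_iff)
qed

lemma KL_expand_add_restricted:
  assumes "Z \<subseteq> Wn n"
  shows "KL_expand n a b (\<lambda>w. c w + (if w \<in> Z then d w else 0)) y
    = KL_expand n a b c y + (\<Sum>z\<in>Z. d z * KLC n a b z y)"
proof -
  have "(\<Sum>w\<in>Wn n. (if w \<in> Z then d w else 0) * KLC n a b w y)
      = (\<Sum>w\<in>Wn n. if w \<in> Z then d w * KLC n a b w y else 0)"
    by (intro sum.cong) auto
  also have "\<dots> = (\<Sum>z\<in>Wn n \<inter> Z. d z * KLC n a b z y)"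
    by (rule sum.inter_restrict[OF finite_Wn, symmetric])
  also have "Wn n \<inter> Z = Z"
    using assms by auto
  finally show ?thesis
    by (simp add: KL_expand_def distrib_right sum.distrib)
qed

lemma KL_expand_surj_bounded:
  assumes "Wn_supported n m" and "\<And>y. m y \<noteq> 0 \<Longrightarrow> clen n y < k"
  shows "\<exists>c. Wn_supported n c \<and> m = KL_expand n a b c"
  using assms
proof (induction k arbitrary: m)
  case 0
  then show ?case
    by (intro exI[of _ "\<lambda>w. 0"]) (auto simp: Wn_supported_def KL_expand_def fun_eq_iff)
next
  case (Suc k)
  let ?Z = "{z \<in> Wn n. clen n z = k}"
  let ?m' = "\<lambda>y. m y - (\<Sum>z\<in>?Z. m z * KLC n a b z y)"
  have KZ: "KL_candidate n a b z (KLC n a b z)" if "z \<in> Wn n" for z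
    using KL_triangular_KLC[OF that] by (simp add: KL_triangular_def)
  have m': "Wn_supported n ?m'"
    using Suc.prems Wn_supported_KLC by (auto simp: Wn_supported_def intro!: sum.neutral)
  have "clen n y < k" if "?m' y \<noteq> 0" for y
  proof (rule ccontr)
    assume "\<not> clen n y < k"
    then have "?m' y = (if y \<in> Wn n \<and> clen n y = k then 0 else m y)"
      using KLC_level_sum_eval[OF KZ, where y = y and c = m] by simp
    moreover have "y \<in> Wn n"
      using that m' by (auto simp: Wn_supported_def)
    ultimately show False
      using that Suc.prems(2)[of y] \<open>\<not> clen n y < k\<close> by (auto split: if_splits)
  qed
  then obtain c' where c': "Wn_supported n c'" "?m' = KL_expand n a b c'"
    using Suc.IH[OF m'] by blast
  let ?c = "\<lambda>w. c' w + (if w \<in> ?Z then m w else 0)"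
  have "Wn_supported n ?c"
    using c'(1) by (auto simp: Wn_supported_def)
  moreover have "KL_expand n a b ?c y = m y" for y
    using KL_expand_add_restricted[of ?Z c' m y] fun_cong[OF c'(2), of y] by (simp add: algebra_simps)
  ultimately show ?case
    by (auto simp: fun_eq_iff)
qed

lemma KL_expand_surj:
  assumes "Wn_supported n m"
  obtains c where "Wn_supported n c" and "m = KL_expand n a b c"
proof -
  have "clen n y < Suc (Max (clen n ` Wn n))" if "m y \<noteq> 0" for y
    using that assms finite_Wn[of n] by (auto simp: Wn_supported_def less_Suc_eq_le intro: Max_ge)
  then show ?thesis
    using KL_expand_surj_bounded[OF assms] that by blast
qed

lemma coeffC_KL_expand:
  assumes "Wn_supported n c"
  shows "coeffC n a b x (KL_expand n a b c) = c x"
proof -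
  have "(THE c'. (\<forall>w. w \<notin> Wn n \<longrightarrow> c' w = 0) \<and> KL_expand n a b c = KL_expand n a b c') = c"
    using assms KL_expand_inj by (intro the_equality) (auto simp: Wn_supported_def)
  then show ?thesis
    by (simp add: coeffC_def KL_expand_def)
qed

lemma KL_expand_coeff_bar_invariant:
  assumes c: "Wn_supported n c" and bar: "barH n a b (KL_expand n a b c) = KL_expand n a b c"
  shows "barA (c w) = c w"
proof -
  have "barH n a b (KL_expand n a b c) = KL_expand n a b (\<lambda>w. barA (c w))"
    unfolding KL_expand_def barH_sum using barH_KLC by (auto intro!: sum.cong)
  then have "(\<lambda>w. barA (c w)) = c"
    using KL_expand_inj c bar by (metis Wn_supported_def barA_zero)
  then show ?thesis
    by (metis)
qed

section \<open>Right cells\<close>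

lemma rmulC_hecke: "s \<in> Sgens n \<Longrightarrow> rmulC n a b s \<in> hecke n a b"
  using hecke.add[OF hecke.gen hecke.scal, of s n a b "vinv a b s"] by (simp add: rmulC_def[abs_def])

lemma vinv_sgen_Aneg: "0 < a \<Longrightarrow> 1 \<le> i \<Longrightarrow> vinv a b (sgen i) \<in> Aneg"
  by (simp add: vinv_sgen Aneg_expo)

lemma rmulC_KLC_ascent_coeffs:
  assumes w: "w \<in> Wn n" and s: "s \<in> Sgens n" and up: "clen n (w \<circ> s) = clen n w + 1"
    and c: "Wn_supported n c" and expand: "rmulC n a b s (KLC n a b w) = KL_expand n a b c"
  shows "c (w \<circ> s) = 1" and "\<And>v. v \<in> Wn n \<Longrightarrow> v \<noteq> w \<circ> s \<Longrightarrow> clen n w < clen n v \<Longrightarrow> c v = 0"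
proof -
  let ?m = "rmulC n a b s (KLC n a b w)"
  have ws: "w \<circ> s \<in> Wn n"
    using Wn_comp_Sgens_iff[OF n s] w by simp
  have supp: "y = w \<circ> s \<or> clen n y \<le> clen n w" if "y \<in> Wn n" "?m y \<noteq> 0" for y
    using rmulT_support_triangular[OF s that(1) KLC_nonzero[OF w] rmulC_nonzero[OF that(2)]] .
  have above: "c v = 0" if "clen n w + 1 < clen n v" for v
    using supp up expand by (intro KL_expand_coeff_eq_0_above[OF c _ that]) fastforce
  have eval: "KL_expand n a b c v = c v" if "v \<in> Wn n" "clen n v = clen n w + 1" for v
    using KL_expand_eval[OF that(1), of c] above that(2) by (simp add: sum.neutral)
  have "w \<circ> s \<noteq> w"
    using up by auto
  then have "KLC n a b w (w \<circ> s) = 0"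
    using KLC_eq_0[OF w, of "w \<circ> s"] up by simp
  moreover have "w \<circ> s \<circ> s = w"
    using Sgens_comp_self[OF s] .
  ultimately have "?m (w \<circ> s) = 1"
    using KLC_diag[OF w] up by (simp add: rmulC_def rmulT_eq)
  then show "c (w \<circ> s) = 1"
    using eval[OF ws up] expand by simp
  show "c v = 0" if "v \<in> Wn n" "v \<noteq> w \<circ> s" "clen n w < clen n v" for v
  proof (cases "clen n v = clen n w + 1")
    case True
    then show ?thesis
      using eval[OF that(1) True] supp[OF that(1)] that(2) expand by force
  next
    case False
    then show ?thesis
      using above that(3) by simp
  qed
qed

lemma rmulC_KLC_coeff_bar_invariant:
  assumes w: "w \<in> Wn n" and s: "s \<in> Sgens n"
    and c: "Wn_supported n c" and expand: "rmulC n a b s (KLC n a b w) = KL_expand n a b c"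
  shows "barA (c v) = c v"
  using KL_expand_coeff_bar_invariant[OF c] barH_rmulC[OF s Wn_supported_KLC[OF w]] barH_KLC[OF w] expand
  by metis

lemma arrowR_comp_ascent:
  assumes w: "w \<in> Wn n" and s: "s \<in> Sgens n" and up: "clen n (w \<circ> s) = clen n w + 1"
  shows "arrowR n a b (w \<circ> s) w"
proof -
  obtain c where c: "Wn_supported n c" "rmulC n a b s (KLC n a b w) = KL_expand n a b c"
    using KL_expand_surj[OF Wn_supported_rmulC[OF s Wn_supported_KLC[OF w]]] by metis
  then have "coeffC n a b (w \<circ> s) (rmulC n a b s (KLC n a b w)) = 1"
    using rmulC_KLC_ascent_coeffs[OF w s up c] coeffC_KL_expand[OF c(1)] by simp
  then show ?thesis
    using w Wn_comp_Sgens_iff[OF n s] rmulC_hecke[OF s] by (auto simp: arrowR_def intro!: bexI[of _ "rmulC n a b s"])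
qed

text \<open>Comparing the coefficients of \<open>T\<^sub>w\<close> in \<open>C\<^sub>w C\<^sub>s\<close> and in its expansion leaves a bar-invariant
  element of \<open>A\<^sub><\<^sub>0\<close>, which vanishes.\<close>
lemma KLC_comp_sgen_ascent:
  assumes a: "0 < a" and w: "w \<in> Wn n" and i: "1 \<le> i" "i \<le> int n - 1"
    and up: "clen n (w \<circ> sgen i) = clen n w + 1"
  shows "KLC n a b (w \<circ> sgen i) w = expo (- a)"
proof -
  let ?s = "sgen i"
  let ?m = "rmulC n a b ?s (KLC n a b w)"
  have s: "?s \<in> Sgens n"
    using i by (auto simp: Sgens_def)
  have ws: "w \<circ> ?s \<in> Wn n"
    using Wn_comp_Sgens_iff[OF n s] w by simp
  have m: "Wn_supported n ?m"
    using Wn_supported_rmulC[OF s Wn_supported_KLC[OF w]] .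
  obtain c where c: "Wn_supported n c" "?m = KL_expand n a b c"
    using KL_expand_surj[OF m] by metis
  have bar: "barA (c v) = c v" for v
    using rmulC_KLC_coeff_bar_invariant[OF w s c] .
  have "?m w = c w + KLC n a b (w \<circ> ?s) w"
    using KL_expand_eval_single[OF w ws, of c] rmulC_KLC_ascent_coeffs[OF w s up c] up c(2) by simp
  moreover have ne: "w \<circ> ?s \<noteq> w"
    using up by auto
  then have "?m w = expo (- a)"
    using KLC_diag[OF w] KLC_eq_0[OF w, of "w \<circ> ?s"] up i by (simp add: rmulC_def rmulT_eq vinv_sgen)
  ultimately have cw: "c w = expo (- a) - KLC n a b (w \<circ> ?s) w"
    by (simp add: algebra_simps)
  moreover have "KLC n a b (w \<circ> ?s) w \<in> Aneg"
    using KLC_Aneg[OF ws, of w] ne by auto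
  moreover have "expo (- a) \<in> Aneg"
    using a by (simp add: Aneg_expo)
  ultimately have "c w \<in> Aneg"
    using Aneg_diff by simp
  then have "c w = 0"
    using bar_invariant_Aneg_eq_0 bar by blast
  then show ?thesis
    using cw by simp
qed

lemma rmulC_KLC_sgen_level_Aneg:
  assumes a: "0 < a" and w: "w \<in> Wn n" and j: "1 \<le> j" "j \<le> int n - 1"
    and up: "clen n (w \<circ> sgen j) = clen n w + 1" and z: "clen n z = clen n w"
  shows "rmulC n a b (sgen j) (KLC n a b w) z \<in> Aneg"
proof (cases "z = w")
  case True
  have "w \<circ> sgen j \<noteq> w"
    using up by auto
  then have "KLC n a b w (w \<circ> sgen j) = 0"
    using KLC_eq_0[OF w, of "w \<circ> sgen j"] up by simp
  then show ?thesis
    using True KLC_diag[OF w] up vinv_sgen_Aneg[OF a j(1)] by (simp add: rmulC_def rmulT_eq)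
next
  case False
  have "sgen j \<in> Sgens n"
    using j by (auto simp: Sgens_def)
  then have "z \<circ> sgen j \<noteq> w"
    using Sgens_comp_eq_iff[of "sgen j" n z w] z up by auto
  then show ?thesis
    using KLC_eq_0[OF w False] KLC_Aneg[OF w, of "z \<circ> sgen j"] z by (simp add: rmulC_def rmulT_eq)
qed

lemma rmulC_KLC_ascent_level_coeffs:
  assumes a: "0 < a" and w: "w \<in> Wn n" and j: "1 \<le> j" "j \<le> int n - 1"
    and up: "clen n (w \<circ> sgen j) = clen n w + 1"
    and c: "Wn_supported n c" and expand: "rmulC n a b (sgen j) (KLC n a b w) = KL_expand n a b c"
    and z: "z \<in> Wn n" "clen n z = clen n w"
  shows "c z = 0"
proof -
  let ?t = "sgen j"
  let ?u = "w \<circ> ?t"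
  have t: "?t \<in> Sgens n"
    using j by (auto simp: Sgens_def)
  have u: "?u \<in> Wn n"
    using Wn_comp_Sgens_iff[OF n t] w by simp
  have "KL_expand n a b c z = c z + c ?u * KLC n a b ?u z"
    using rmulC_KLC_ascent_coeffs(2)[OF w t up c expand] z up
    by (intro KL_expand_eval_single[OF z(1) u]) auto
  then have cz: "c z = rmulC n a b ?t (KLC n a b w) z - KLC n a b ?u z"
    using rmulC_KLC_ascent_coeffs(1)[OF w t up c expand] expand by simp
  have "z \<noteq> ?u"
  proof
    assume "z = ?u"
    with z(2) up show False by simp
  qed
  then have "c z \<in> Aneg"
    unfolding cz using KLC_Aneg[OF u] rmulC_KLC_sgen_level_Aneg[OF a w j up z(2)] by (intro Aneg_diff) auto
  then show ?thesis
    using bar_invariant_Aneg_eq_0 rmulC_KLC_coeff_bar_invariant[OF w t c expand] by blast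
qed

lemma rmulC_KLC_sgen_descent_eval:
  assumes j: "1 \<le> j" and down: "clen n (w \<circ> sgen j) < clen n w"
    and coeff: "KLC n a b w' w = expo (- a)"
  shows "rmulC n a b (sgen j) (KLC n a b w') w = KLC n a b w' (w \<circ> sgen j) + 1"
proof -
  have "(expo a - expo (- a)) * expo (- a) + expo (- a) * expo (- a) = (1 :: 'g grpring)"
    by (simp add: algebra_simps expo_mult)
  then show ?thesis
    using coeff down j by (simp add: rmulC_def rmulT_eq vdiff_def vpar_sgen vinv_sgen algebra_simps)
qed

lemma arrowR_ascent_descent:
  assumes a: "0 < a" and w: "w \<in> Wn n" and i: "1 \<le> i" "i \<le> int n - 1" and j: "1 \<le> j" "j \<le> int n - 1"
    and up: "clen n (w \<circ> sgen i) = clen n w + 1"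
    and up2: "clen n (w \<circ> sgen i \<circ> sgen j) = clen n (w \<circ> sgen i) + 1"
    and down: "clen n (w \<circ> sgen j) + 1 = clen n w"
  shows "arrowR n a b w (w \<circ> sgen i)"
proof -
  let ?w' = "w \<circ> sgen i" and ?t = "sgen j"
  let ?u = "?w' \<circ> ?t" and ?m = "rmulC n a b (sgen j) (KLC n a b (w \<circ> sgen i))"
  have t: "?t \<in> Sgens n"
    using j by (auto simp: Sgens_def)
  have w': "?w' \<in> Wn n"
    using sgen_Wn[OF i] w by (simp add: Wn_comp)
  have u: "?u \<in> Wn n"
    using Wn_comp_Sgens_iff[OF n t] w' by simp
  obtain c where c: "Wn_supported n c" "?m = KL_expand n a b c"
    using KL_expand_surj[OF Wn_supported_rmulC[OF t Wn_supported_KLC[OF w']]] by metis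
  have "c v = 0" if "v \<in> Wn n" "v \<noteq> ?u" "clen n w < clen n v" for v
    using rmulC_KLC_ascent_coeffs(2)[OF w' t up2 c] rmulC_KLC_ascent_level_coeffs[OF a w' j up2 c] that up
    by (cases "clen n v = clen n ?w'") auto
  then have "?m w = c w + KLC n a b ?u w"
    using KL_expand_eval_single[OF w u, of c] rmulC_KLC_ascent_coeffs(1)[OF w' t up2 c] c(2) up up2 by simp
  moreover have "?m w = KLC n a b ?w' (w \<circ> ?t) + 1"
    using rmulC_KLC_sgen_descent_eval[OF j(1) _ KLC_comp_sgen_ascent[OF a w i up]] down by simp
  ultimately have "c w - 1 = KLC n a b ?w' (w \<circ> ?t) - KLC n a b ?u w"
    by (simp add: algebra_simps)
  moreover have "w \<circ> ?t \<noteq> ?w'" and "w \<noteq> ?u"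
    using up up2 down by auto
  then have "KLC n a b ?w' (w \<circ> ?t) - KLC n a b ?u w \<in> Aneg"
    using KLC_Aneg[OF w'] KLC_Aneg[OF u] by (simp add: Aneg_diff)
  moreover have "barA (c w - 1) = c w - 1"
    using rmulC_KLC_coeff_bar_invariant[OF w' t c] by (simp add: barA_diff)
  ultimately have "c w = 1"
    using bar_invariant_Aneg_eq_0 by fastforce
  then have "coeffC n a b w ?m \<noteq> 0"
    using coeffC_KL_expand[OF c(1)] c(2) by simp
  then show ?thesis
    using w w' rmulC_hecke[OF t] by (auto simp: arrowR_def intro!: bexI[of _ "rmulC n a b ?t"])
qed

end

lemma clen_comp_sgen_ascent:
  assumes "1 \<le> n" "y \<in> Wn n" "1 \<le> i" "i \<le> int n - 1" and "y i < y (i + 1)"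
  shows "clen n (y \<circ> sgen i) = clen n y + 1"
  using clen_comp_sgen[OF assms(1-4)] assms(5) by simp

lemma clen_comp_sgen_descent:
  assumes "1 \<le> n" "y \<in> Wn n" "1 \<le> i" "i \<le> int n - 1" and "y (i + 1) < y i"
  shows "clen n (y \<circ> sgen i) + 1 = clen n y"
  using clen_comp_sgen[OF assms(1-4)] assms(5) by simp

text \<open>Take \<open>j = i - 1\<close> in the first case of \<open>smile1\<close> and \<open>j = i + 1\<close> in the second.\<close>
lemma smile1_ascent_descent:
  assumes w: "w \<in> Wn n" and "smile1 n w w'"
  obtains i j where "w' = w \<circ> sgen i" and "1 \<le> i" "i \<le> int n - 1" and "1 \<le> j" "j \<le> int n - 1"
    and "clen n (w \<circ> sgen i) = clen n w + 1"
    and "clen n (w \<circ> sgen i \<circ> sgen j) = clen n (w \<circ> sgen i) + 1"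
    and "clen n (w \<circ> sgen j) + 1 = clen n w"
proof -
  obtain i where w': "w' = w \<circ> sgen i" and cases:
    "(2 \<le> i \<and> i \<le> int n - 1 \<and> w i < w (i - 1) \<and> w (i - 1) < w (i + 1)) \<or>
     (1 \<le> i \<and> i \<le> int n - 2 \<and> w i < w (i + 2) \<and> w (i + 2) < w (i + 1))"
    using assms(2) by (auto simp: smile1_def)
  then have n: "1 \<le> n" and i: "1 \<le> i" "i \<le> int n - 1"
    by auto
  have wi: "w \<circ> sgen i \<in> Wn n"
    using Wn_comp[OF w sgen_Wn[OF i]] .
  from cases show ?thesis
  proof
    assume c: "2 \<le> i \<and> i \<le> int n - 1 \<and> w i < w (i - 1) \<and> w (i - 1) < w (i + 1)"
    have j: "1 \<le> i - 1" "i - 1 \<le> int n - 1"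
      using c by auto
    have "(w \<circ> sgen i) (i - 1) < (w \<circ> sgen i) (i - 1 + 1)"
      using c by (simp add: sgen_def)
    then show ?thesis
      using that[OF w' i j] c clen_comp_sgen_ascent[OF n w i] clen_comp_sgen_ascent[OF n wi j]
        clen_comp_sgen_descent[OF n w j]
      by simp
  next
    assume c: "1 \<le> i \<and> i \<le> int n - 2 \<and> w i < w (i + 2) \<and> w (i + 2) < w (i + 1)"
    have j: "1 \<le> i + 1" "i + 1 \<le> int n - 1"
      using c by auto
    have "(w \<circ> sgen i) (i + 1) < (w \<circ> sgen i) (i + 1 + 1)"
      using c by (simp add: sgen_def add.assoc)
    moreover have "w (i + 1 + 1) < w (i + 1)"
      using c by (simp add: add.assoc)
    ultimately show ?thesis
      using that[OF w' i j] c clen_comp_sgen_ascent[OF n w i] clen_comp_sgen_ascent[OF n wi j]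
        clen_comp_sgen_descent[OF n w j]
      by simp
  qed
qed

theorem lemma7p1:
  fixes a b :: "'g::linordered_ab_group_add" and n :: nat and w w' :: "int \<Rightarrow> int"
  assumes "a > 0" and "b > 0"
    and "w \<in> Wn n" and "w' \<in> Wn n"
    and "smile1 n w w'"
  shows "simR n a b w w'"
proof -
  obtain i j where w': "w' = w \<circ> sgen i" and i: "1 \<le> i" "i \<le> int n - 1" and j: "1 \<le> j" "j \<le> int n - 1"
    and up: "clen n (w \<circ> sgen i) = clen n w + 1"
    and up2: "clen n (w \<circ> sgen i \<circ> sgen j) = clen n (w \<circ> sgen i) + 1"
    and down: "clen n (w \<circ> sgen j) + 1 = clen n w"
    using smile1_ascent_descent[OF assms(3,5)] by blast
  interpret hecke_Bn n a b
    using i by unfold_locales simp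
  have s: "sgen i \<in> Sgens n"
    using i by (auto simp: Sgens_def)
  have "arrowR n a b w' w"
    using arrowR_comp_ascent[OF assms(3) s up] w' by simp
  moreover have "arrowR n a b w w'"
    using arrowR_ascent_descent[OF assms(1,3) i j up up2 down] w' by simp
  ultimately show ?thesis
    by (auto simp: simR_def leR_def)
qed

end
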